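(* Let $\kappa,\kappa'$ be two functions as in the standing assumptions with $\lim_{t\to\infty}\kappa'(t)/\kappa(t)=0$. Then $\partial_{\kappa'}X_A\subsetneq\partial_\kappa X_A$, i.e. the inclusion is strict.
   Context: $A=\mathbb Z^2*\mathbb Z=\langle g_1,g_2,g_3\mid[g_1,g_2]\rangle$ and $X_A$ is the universal cover of its Salvetti complex: a CAT(0) tree of flats, each flat a Euclidean plane tiled by unit squares (cosets of $\langle g_1,g_2\rangle$), joined by unit-length edges labelled $g_3$ attached at lattice points; base point $\mathfrak o$ a lattice point of a flat at which a $g_3$ edge is attached; $\|x\|=d(\mathfrak o,x)$. For $\lambda:[0,\infty)\to[1,\infty)$ monotone increasing, concave and sublinear, put $\lambda(x)=\lambda(\|x\|)$, $\mathcal N_\lambda(Z,n)=\{x:d(x,Z)\le n\lambda(x)\}$; a closed set $Z$ is $\lambda$--contracting if there is $c_Z$ with $\operatorname{diam}(x_Z\cup y_Z)\le c_Z\lambda(x)$ whenever $d(x,y)\le d(x,Z)$; quasi-geodesic rays are continuous quasi-isometric embeddings of $[0,\infty)$ starting at $\mathfrak o$, two rays $\lambda$--fellow travel if each lies in some $\mathcal N_\lambda(\cdot,n)$ of the other; $\partial_\lambda X_A$ is the set of $\lambda$--fellow-travelling classes of $\lambda$--contracting quasi-geodesic rays (equivalently, the set of $\lambda$--contracting geodesic rays from $\mathfrak o$). *)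

theory Defs
  imports "HOL-Analysis.Analysis"
begin

definition setdist_d :: "('a \<Rightarrow> 'a \<Rightarrow> real) \<Rightarrow> 'a \<Rightarrow> 'a set \<Rightarrow> real" where
  "setdist_d d x Z = Inf ((\<lambda>z. d x z) ` Z)"

definition proj_d :: "('a \<Rightarrow> 'a \<Rightarrow> real) \<Rightarrow> 'a \<Rightarrow> 'a set \<Rightarrow> 'a set" where
  "proj_d d x Z = {z \<in> Z. d x z = setdist_d d x Z}"

definition diam_d :: "('a \<Rightarrow> 'a \<Rightarrow> real) \<Rightarrow> 'a set \<Rightarrow> real" where
  "diam_d d S = Sup {d a b | a b. a \<in> S \<and> b \<in> S}"

definition closed_d :: "'a set \<Rightarrow> ('a \<Rightarrow> 'a \<Rightarrow> real) \<Rightarrow> 'a set \<Rightarrow> bool" where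
  "closed_d X d Z \<longleftrightarrow> Z \<subseteq> X \<and> (\<forall>x\<in>X. (\<forall>e>0. \<exists>z\<in>Z. d x z < e) \<longrightarrow> x \<in> Z)"

text \<open>Z is lam-contracting; lam(x) means lam(d b x)\<close>
definition contracting :: "'a set \<Rightarrow> ('a \<Rightarrow> 'a \<Rightarrow> real) \<Rightarrow> 'a \<Rightarrow> (real \<Rightarrow> real) \<Rightarrow> 'a set \<Rightarrow> bool" where
  "contracting X d b lam Z \<longleftrightarrow> closed_d X d Z \<and>
     (\<exists>c. \<forall>x\<in>X. \<forall>y\<in>X. d x y \<le> setdist_d d x Z \<longrightarrow>
        diam_d d (proj_d d x Z \<union> proj_d d y Z) \<le> c * lam (d b x))"

definition geo_ray :: "'a set \<Rightarrow> ('a \<Rightarrow> 'a \<Rightarrow> real) \<Rightarrow> 'a \<Rightarrow> (real \<Rightarrow> 'a) \<Rightarrow> bool" where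
  "geo_ray X d b \<gamma> \<longleftrightarrow> \<gamma> 0 = b \<and> (\<forall>t\<ge>0. \<gamma> t \<in> X) \<and>
     (\<forall>s\<ge>0. \<forall>t\<ge>0. d (\<gamma> s) (\<gamma> t) = \<bar>s - t\<bar>)"

text \<open>The sublinearly Morse boundary, as the set of (images of) lam-contracting geodesic rays from o.
  A geodesic ray from o is determined by its image.\<close>
definition bdry :: "'a set \<Rightarrow> ('a \<Rightarrow> 'a \<Rightarrow> real) \<Rightarrow> 'a \<Rightarrow> (real \<Rightarrow> real) \<Rightarrow> 'a set set" where
  "bdry X d b lam = {\<gamma> ` {0..} | \<gamma>. geo_ray X d b \<gamma> \<and> contracting X d b lam (\<gamma> ` {0..})}"

text \<open>standing assumptions on lam\<close>
definition admissible :: "(real \<Rightarrow> real) \<Rightarrow> bool" where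
  "admissible lam \<longleftrightarrow> mono_on {0..} lam \<and> concave_on {0..} lam \<and> (\<forall>t\<ge>0. 1 \<le> lam t)
     \<and> ((\<lambda>t. lam t / t) \<longlongrightarrow> 0) at_top"

section \<open>The space X_A: universal cover of the Salvetti complex of Z^2 * Z\<close>

text \<open>A flat (coset g<g1,g2>) is coded by a list [(h0,e1),(h1,e2),...,(h_{k-1},e_k)] meaning
  h0 g3^{e1} h1 g3^{e2} ... g3^{ek} <g1,g2>, with h_i in Z^2 and e_i = +1 (True) / -1 (False). A vertex (group element) is a flat plus a lattice
  point of it; the flat is entered via its g3-edge at the origin.\<close>

type_synonym word = "((int \<times> int) \<times> bool) list"

definition reduced :: "word \<Rightarrow> bool" where
  "reduced L \<longleftrightarrow> (\<forall>i. Suc i < length L \<longrightarrow>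
      \<not> (fst (L ! Suc i) = (0, 0) \<and> snd (L ! Suc i) \<noteq> snd (L ! i)))"

datatype xa_pt = FP word complex | EP word "int \<times> int" real

definition lat :: "int \<times> int \<Rightarrow> complex" where
  "lat p = Complex (of_int (fst p)) (of_int (snd p))"

text \<open>the endpoint g g3 of the g3-edge leaving the vertex g = (L,p)\<close>
definition edge_target :: "word \<Rightarrow> int \<times> int \<Rightarrow> xa_pt" where
  "edge_target L p = (if L \<noteq> [] \<and> snd (last L) = False \<and> p = (0, 0)
      then FP (butlast L) (lat (fst (last L)))
      else FP (L @ [(p, True)]) 0)"

definition XA :: "xa_pt set" where
  "XA = {FP L z | L z. reduced L} \<union> {EP L p t | L p t. reduced L \<and> 0 < t \<and> t < 1}"

definition xa_o :: xa_pt where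
  "xa_o = FP [] 0"

text \<open>closed unit edge from vertex (L,p) to edge_target L p, with its arclength parameter\<close>
definition xa_edge :: "word \<Rightarrow> int \<times> int \<Rightarrow> xa_pt set" where
  "xa_edge L p = {FP L (lat p), edge_target L p} \<union> {EP L p t | t. 0 < t \<and> t < 1}"

definition epar :: "word \<Rightarrow> int \<times> int \<Rightarrow> xa_pt \<Rightarrow> real" where
  "epar L p x = (if x = FP L (lat p) then 0 else if x = edge_target L p then 1
      else (case x of EP _ _ t \<Rightarrow> t | FP _ _ \<Rightarrow> 0))"

definition xa_step :: "xa_pt \<Rightarrow> xa_pt \<Rightarrow> real \<Rightarrow> bool" where
  "xa_step x y c \<longleftrightarrow>
     (\<exists>L z w. reduced L \<and> x = FP L z \<and> y = FP L w \<and> c = cmod (z - w)) \<or>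
     (\<exists>L p. reduced L \<and> x \<in> xa_edge L p \<and> y \<in> xa_edge L p \<and> c = \<bar>epar L p x - epar L p y\<bar>)"

definition xa_dist :: "xa_pt \<Rightarrow> xa_pt \<Rightarrow> real" where
  "xa_dist x y = Inf {sum_list cs | xs cs. xs \<noteq> [] \<and> hd xs = x \<and> last xs = y \<and>
      length cs + 1 = length xs \<and> (\<forall>i<length cs. xa_step (xs ! i) (xs ! Suc i) (cs ! i))}"

end

theory Submission
  imports Defs
begin

text \<open>The inclusion holds because \<open>\<kappa>' \<le> C \<kappa>\<close> on \<open>[0, \<infinity>)\<close>.  For strictness, take any
  integers \<open>a\<^sub>k \<ge> 1\<close> and the geodesic ray that enters its \<open>k\<close>-th flat at time \<open>T\<^sub>k\<close> at the origin,
  runs along the real axis to the lattice point \<open>(a\<^sub>k, 0)\<close> and leaves through the \<open>g\<^sub>3\<close>-edge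
  attached there.  As \<open>X\<^sub>A\<close> is a tree of flats, the distance from any point to the ray has an
  explicit formula (an explicit path bounds it above, a function that is 1-Lipschitz on every
  cell bounds it below).  Hence closest-point projections to the ray are single points, and two
  points as in the definition of contraction either have the same projection or project into
  one segment of length \<open>a\<^sub>k\<close> with \<open>T\<^sub>k \<le> \<parallel>x\<parallel>\<close>: the ray is \<open>\<lambda>\<close>-contracting as soon as
  \<open>a\<^sub>k \<le> C \<lambda>(T\<^sub>k)\<close>.  With \<open>a\<^sub>k = \<lfloor>\<kappa>(T\<^sub>k)\<rfloor>\<close> it is \<open>\<kappa>\<close>-contracting, while the two points at height
  \<open>a\<^sub>k\<close> above the ends of the \<open>k\<close>-th segment show that it is not \<open>\<kappa>'\<close>-contracting, because
  \<open>\<kappa>'(T\<^sub>k + a\<^sub>k) \<le> 2 \<kappa>'(T\<^sub>k)\<close> is negligible against \<open>a\<^sub>k\<close>.\<close>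

section \<open>Length metrics generated by cell steps\<close>

inductive step_chain :: "('a \<Rightarrow> 'a \<Rightarrow> real \<Rightarrow> bool) \<Rightarrow> 'a \<Rightarrow> 'a \<Rightarrow> real \<Rightarrow> bool"
  for step :: "'a \<Rightarrow> 'a \<Rightarrow> real \<Rightarrow> bool" where
  refl: "step_chain step x x 0"
| cons: "step x y c \<Longrightarrow> step_chain step y z e \<Longrightarrow> step_chain step x z (c + e)"

lemma step_chain_single: "step x y c \<Longrightarrow> step_chain step x y c"
  using step_chain.cons[of step x y c y 0] step_chain.refl[of step y] by simp

lemma step_chain_trans:
  "step_chain step x y c \<Longrightarrow> step_chain step y z e \<Longrightarrow> step_chain step x z (c + e)"
proof (induction arbitrary: z e rule: step_chain.induct)
  case (refl x)
  then show ?case by simp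
next
  case (cons x y c z' e')
  then show ?case using step_chain.cons[of step x y c z "e' + e"] by (simp add: add.assoc)
qed

lemma step_chain_sym:
  assumes "\<And>x y c. step x y c \<Longrightarrow> step y x c"
  shows "step_chain step x y c \<Longrightarrow> step_chain step y x c"
proof (induction rule: step_chain.induct)
  case (refl x)
  then show ?case by (rule step_chain.refl)
next
  case (cons x y c z e)
  have "step_chain step y x c" by (rule step_chain_single) (rule assms[OF cons(1)])
  then show ?case using step_chain_trans[OF cons(3)] by (simp add: add.commute)
qed

lemma step_chain_nonneg:
  assumes "\<And>x y c. step x y c \<Longrightarrow> 0 \<le> c"
  shows "step_chain step x y c \<Longrightarrow> 0 \<le> c"
  by (induction rule: step_chain.induct) (auto dest: assms)

lemma step_chain_lipschitz:
  assumes "\<And>x y c. step x y c \<Longrightarrow> f x - f y \<le> c"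
  shows "step_chain step x y c \<Longrightarrow> f x - f y \<le> c"
  by (induction rule: step_chain.induct) (use assms in fastforce)+

lemma step_chain_iff_list:
  "step_chain step x y c \<longleftrightarrow> (\<exists>xs cs. c = sum_list cs \<and> xs \<noteq> [] \<and> hd xs = x \<and> last xs = y \<and>
      length cs + 1 = length xs \<and> (\<forall>i<length cs. step (xs ! i) (xs ! Suc i) (cs ! i)))"
proof
  show "step_chain step x y c \<Longrightarrow> \<exists>xs cs. c = sum_list cs \<and> xs \<noteq> [] \<and> hd xs = x \<and> last xs = y \<and>
      length cs + 1 = length xs \<and> (\<forall>i<length cs. step (xs ! i) (xs ! Suc i) (cs ! i))"
  proof (induction rule: step_chain.induct)
    case (refl x)
    show ?case by (rule exI[of _ "[x]"], rule exI[of _ "[]"]) simp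
  next
    case (cons x y c z e)
    then obtain xs cs where h: "e = sum_list cs" "xs \<noteq> []" "hd xs = y" "last xs = z"
      "length cs + 1 = length xs" "\<forall>i<length cs. step (xs ! i) (xs ! Suc i) (cs ! i)" by blast
    have "\<forall>i<length (c # cs). step ((x # xs) ! i) ((x # xs) ! Suc i) ((c # cs) ! i)"
    proof (intro allI impI)
      fix i assume "i < length (c # cs)"
      then show "step ((x # xs) ! i) ((x # xs) ! Suc i) ((c # cs) ! i)"
        using h cons(1) by (cases i) (auto simp: hd_conv_nth)
    qed
    then show ?case using h by (intro exI[of _ "x # xs"] exI[of _ "c # cs"]) auto
  qed
next
  assume "\<exists>xs cs. c = sum_list cs \<and> xs \<noteq> [] \<and> hd xs = x \<and> last xs = y \<and>
      length cs + 1 = length xs \<and> (\<forall>i<length cs. step (xs ! i) (xs ! Suc i) (cs ! i))"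
  then obtain xs cs where "c = sum_list cs" "xs \<noteq> []" "hd xs = x" "last xs = y"
    "length cs + 1 = length xs" "\<forall>i<length cs. step (xs ! i) (xs ! Suc i) (cs ! i)" by blast
  then show "step_chain step x y c"
  proof (induction cs arbitrary: xs x c)
    case Nil
    then obtain x' where "xs = [x']" by (cases xs) auto
    then show ?case using Nil step_chain.refl[of step x] by simp
  next
    case (Cons c' cs)
    obtain xs' where xs: "xs = x # xs'" using Cons.prems(2,3) by (cases xs) auto
    have ne: "xs' \<noteq> []" using Cons.prems(5) xs by auto
    have "\<forall>i<length cs. step (xs' ! i) (xs' ! Suc i) (cs ! i)"
      using Cons.prems(6) xs by fastforce
    then have "step_chain step (hd xs') y (sum_list cs)"
      using Cons.IH[of "sum_list cs" xs' "hd xs'"] Cons.prems(4,5) xs ne by auto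
    moreover have "step x (hd xs') c'" using Cons.prems(6) xs ne
      by (metis hd_conv_nth length_Cons nth_Cons_0 nth_Cons_Suc zero_less_Suc)
    ultimately show ?case using step_chain.cons Cons.prems(1) by fastforce
  qed
qed

abbreviation xa_chain :: "xa_pt \<Rightarrow> xa_pt \<Rightarrow> real \<Rightarrow> bool" where
  "xa_chain \<equiv> step_chain xa_step"

lemma xa_step_nonneg: "xa_step x y c \<Longrightarrow> 0 \<le> c"
  unfolding xa_step_def by auto

lemma xa_step_sym: "xa_step x y c \<Longrightarrow> xa_step y x c"
  unfolding xa_step_def by (metis abs_minus_commute norm_minus_commute)

lemmas xa_chain_refl = step_chain.refl[of xa_step]

lemmas xa_chain_cons = step_chain.cons[of xa_step]

lemmas xa_chain_single = step_chain_single[of xa_step]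

lemmas xa_chain_trans = step_chain_trans[of xa_step]

lemma xa_chain_sym: "xa_chain x y c \<Longrightarrow> xa_chain y x c"
  by (rule step_chain_sym[OF xa_step_sym])

lemma xa_dist_eq_Inf_chain: "xa_dist x y = Inf {c. xa_chain x y c}"
  unfolding xa_dist_def step_chain_iff_list by (simp add: eq_commute)

lemma xa_dist_le_chain: "xa_chain x y c \<Longrightarrow> xa_dist x y \<le> c"
  unfolding xa_dist_eq_Inf_chain
  by (rule cInf_lower) (auto intro: bdd_belowI[of _ 0] step_chain_nonneg[OF xa_step_nonneg])

lemma xa_dist_nonneg_chain: "xa_chain x y c \<Longrightarrow> 0 \<le> xa_dist x y"
  unfolding xa_dist_eq_Inf_chain
  by (rule cInf_greatest) (auto intro: step_chain_nonneg[OF xa_step_nonneg])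

lemma xa_dist_refl: "xa_dist x x = 0"
  using xa_dist_le_chain[OF step_chain.refl] xa_dist_nonneg_chain[OF step_chain.refl]
  by (meson order.antisym)

lemma xa_dist_le_step: "xa_step x y c \<Longrightarrow> xa_dist x y \<le> c"
  by (rule xa_dist_le_chain[OF step_chain_single])

lemma xa_dist_sym: "xa_dist x y = xa_dist y x"
proof -
  have "{c. xa_chain x y c} = {c. xa_chain y x c}" using xa_chain_sym by blast
  then show ?thesis unfolding xa_dist_eq_Inf_chain by simp
qed

lemma xa_dist_triangle_chain:
  assumes "xa_chain x y c1" "xa_chain y z c2"
  shows "xa_dist x z \<le> xa_dist x y + xa_dist y z"
proof -
  have "xa_dist x z - c \<le> xa_dist y z" if cx: "xa_chain x y c" for c
    unfolding xa_dist_eq_Inf_chain[of y z] using assms(2)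
    by (intro cInf_greatest) (auto simp: algebra_simps dest: xa_dist_le_chain[OF step_chain_trans[OF cx]])
  then have "xa_dist x z - xa_dist y z \<le> xa_dist x y"
    unfolding xa_dist_eq_Inf_chain[of x y] using assms(1)
    by (intro cInf_greatest) (auto simp: algebra_simps)
  then show ?thesis by simp
qed

lemma xa_dist_lipschitz_chain:
  assumes "\<And>x y c. xa_step x y c \<Longrightarrow> f x - f y \<le> c" "xa_chain x y c0"
  shows "f x - f y \<le> xa_dist x y"
  unfolding xa_dist_eq_Inf_chain using step_chain_lipschitz[OF assms(1)] assms(2)
  by (intro cInf_greatest) auto

section \<open>Cells of \<open>X\<^sub>A\<close>\<close>

lemma reduced_butlast: "reduced L \<Longrightarrow> reduced (butlast L)"
  unfolding reduced_def by (auto simp: nth_butlast)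

lemma reduced_snoc:
  assumes "reduced L" "\<not> (L \<noteq> [] \<and> snd (last L) = False \<and> p = (0, 0))"
  shows "reduced (L @ [(p, True)])"
  unfolding reduced_def
proof (intro allI impI)
  fix i assume i: "Suc i < length (L @ [(p, True)])"
  show "\<not> (fst ((L @ [(p, True)]) ! Suc i) = (0, 0) \<and>
        snd ((L @ [(p, True)]) ! Suc i) \<noteq> snd ((L @ [(p, True)]) ! i))"
  proof (cases "Suc i < length L")
    case True then show ?thesis using assms(1) unfolding reduced_def by (auto simp: nth_append)
  next
    case False
    then have "Suc i = length L" using i by simp
    then have "L \<noteq> []" by auto
    have "L ! i = last L" using \<open>Suc i = length L\<close> \<open>L \<noteq> []\<close> by (metis diff_Suc_1 last_conv_nth)
    then show ?thesis using assms(2) \<open>Suc i = length L\<close> \<open>L \<noteq> []\<close> by (auto simp: nth_append)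
  qed
qed

lemma reduced_snoc_imp:
  assumes "reduced (L @ [(p, True)])"
  shows "\<not> (L \<noteq> [] \<and> snd (last L) = False \<and> p = (0, 0))"
proof
  assume L: "L \<noteq> [] \<and> snd (last L) = False \<and> p = (0, 0)"
  define i where "i = length L - 1"
  have "Suc i < length (L @ [(p, True)])" "(L @ [(p, True)]) ! Suc i = (p, True)"
    "(L @ [(p, True)]) ! i = last L"
    using L unfolding i_def by (simp_all add: nth_append last_conv_nth)
  then show False using assms L unfolding reduced_def by fastforce
qed

lemma reduced_edge_target: "reduced L \<Longrightarrow> edge_target L p = FP L' w \<Longrightarrow> reduced L'"
proof -
  assume r: "reduced L" and e: "edge_target L p = FP L' w"
  show ?thesis
  proof (cases "L \<noteq> [] \<and> snd (last L) = False \<and> p = (0, 0)")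
    case True
    then have "L' = butlast L" using e unfolding edge_target_def by simp
    then show ?thesis using reduced_butlast[OF r] by simp
  next
    case False
    then have "L' = L @ [(p, True)]" using e unfolding edge_target_def if_not_P[OF False] by simp
    then show ?thesis using reduced_snoc[OF r False] by simp
  qed
qed

lemma edge_target_FP: "\<exists>L' w. edge_target L p = FP L' w"
  unfolding edge_target_def by auto

lemma xa_edge_subset_XA: "reduced L \<Longrightarrow> xa_edge L p \<subseteq> XA"
proof -
  assume r: "reduced L"
  obtain L' w where t: "edge_target L p = FP L' w" using edge_target_FP by blast
  then have "reduced L'" using reduced_edge_target[OF r] by simp
  then show ?thesis using r t unfolding xa_edge_def XA_def by auto
qed

lemma xa_step_in_XA: "xa_step x y c \<Longrightarrow> x \<in> XA \<and> y \<in> XA"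
  unfolding xa_step_def
proof (elim disjE exE conjE)
  fix L z w assume "reduced L" "x = FP L z" "y = FP L w"
  then show "x \<in> XA \<and> y \<in> XA" by (auto simp: XA_def)
next
  fix L p assume "reduced L" "x \<in> xa_edge L p" "y \<in> xa_edge L p"
  then show "x \<in> XA \<and> y \<in> XA" using xa_edge_subset_XA by blast
qed

lemma origin_in_XA: "xa_o \<in> XA"
  unfolding XA_def xa_o_def reduced_def by auto

lemma lat_zero: "lat (0, 0) = 0"
  unfolding lat_def by (simp add: complex_eq_iff)

lemma xa_step_flat: "reduced L \<Longrightarrow> xa_step (FP L z) (FP L w) (cmod (z - w))"
  unfolding xa_step_def by auto

lemma edge_target_neq_source: "edge_target L p \<noteq> FP L (lat p)"
proof
  assume a: "edge_target L p = FP L (lat p)"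
  show False
  proof (cases "L \<noteq> [] \<and> snd (last L) = False \<and> p = (0, 0)")
    case True
    then have "butlast L = L" using a unfolding edge_target_def by simp
    then have "length (butlast L) = length L" by simp
    moreover have "length (butlast L) < length L" using True by (cases L) simp_all
    ultimately show False by simp
  next
    case False
    then have "L @ [(p, True)] = L" using a unfolding edge_target_def if_not_P[OF False] by simp
    then have "length (L @ [(p, True)]) = length L" by simp
    then show False by simp
  qed
qed

lemma epar_source: "epar L p (FP L (lat p)) = 0" unfolding epar_def by simp

lemma epar_target: "epar L p (edge_target L p) = 1" using edge_target_neq_source unfolding epar_def by simp

lemma epar_EP: "epar L p (EP L p t) = t"
  using edge_target_FP[of L p] unfolding epar_def by auto

lemma xa_step_edge: "reduced L \<Longrightarrow> x \<in> xa_edge L p \<Longrightarrow> y \<in> xa_edge L p \<Longrightarrow>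
   xa_step x y \<bar>epar L p x - epar L p y\<bar>"
  unfolding xa_step_def by blast

lemma source_in_xa_edge: "FP L (lat p) \<in> xa_edge L p" unfolding xa_edge_def by simp

lemma target_in_xa_edge: "edge_target L p \<in> xa_edge L p" unfolding xa_edge_def by simp

lemma EP_in_xa_edge: "0 < t \<Longrightarrow> t < 1 \<Longrightarrow> EP L p t \<in> xa_edge L p" unfolding xa_edge_def by simp

lemma chain_FP_to_origin: "reduced L \<Longrightarrow> \<exists>c. xa_chain (FP L z) xa_o c"
proof (induction "length L" arbitrary: L z)
  case 0
  then have "L = []" by simp
  then show ?case using xa_chain_single[OF xa_step_flat[OF \<open>reduced L\<close>, of z 0]] unfolding xa_o_def by auto
next
  case (Suc n)
  then obtain L' h e where L: "L = L' @ [(h, e)]"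
    by (metis length_Suc_conv_rev prod.collapse)
  have rL': "reduced L'" using reduced_butlast[OF Suc.prems] L by simp
  obtain c' where c': "xa_chain (FP L' (lat h)) xa_o c'" using Suc.hyps(1)[OF _ rL'] L Suc.hyps(2) by auto
  have s1: "xa_step (FP L z) (FP L 0) (cmod z)" using xa_step_flat[OF Suc.prems, of z 0] by simp
  have "\<exists>c. xa_step (FP L 0) (FP L' (lat h)) c"
  proof (cases e)
    case True
    have "\<not> (L' \<noteq> [] \<and> snd (last L') = False \<and> h = (0, 0))"
      using reduced_snoc_imp[of L' h] Suc.prems L True by simp
    then have "edge_target L' h = FP L 0" unfolding edge_target_def using L True by auto
    then show ?thesis using xa_step_edge[OF rL' target_in_xa_edge source_in_xa_edge, of h] by (auto simp: xa_step_sym)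
  next
    case False
    then have "edge_target L (0,0) = FP L' (lat h)" unfolding edge_target_def using L by simp
    then show ?thesis using xa_step_edge[OF Suc.prems source_in_xa_edge target_in_xa_edge, of "(0,0)"] by (auto simp: lat_zero)
  qed
  then obtain c2 where s2: "xa_step (FP L 0) (FP L' (lat h)) c2" by blast
  show ?case using xa_chain_cons[OF s1 xa_chain_cons[OF s2 c']] by blast
qed

lemma chain_to_origin: "x \<in> XA \<Longrightarrow> \<exists>c. xa_chain x xa_o c"
proof -
  assume "x \<in> XA"
  then consider L z where "x = FP L z" "reduced L" | L p t where "x = EP L p t" "reduced L" "0 < t" "t < 1"
    unfolding XA_def by blast
  then show ?thesis
  proof cases
    case 1 then show ?thesis using chain_FP_to_origin by blast
  next
    case 2
    then obtain c where "xa_chain (FP L (lat p)) xa_o c" using chain_FP_to_origin by blast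
    moreover have "xa_step x (FP L (lat p)) \<bar>t - 0\<bar>"
      using xa_step_edge[OF 2(2) EP_in_xa_edge[OF 2(3,4)] source_in_xa_edge, of p] 2 by (simp add: epar_EP epar_source)
    ultimately show ?thesis using xa_chain_cons by blast
  qed
qed

lemma xa_chain_exists: "x \<in> XA \<Longrightarrow> y \<in> XA \<Longrightarrow> \<exists>c. xa_chain x y c"
proof -
  assume "x \<in> XA" "y \<in> XA"
  then obtain c1 c2 where "xa_chain x xa_o c1" "xa_chain y xa_o c2" using chain_to_origin by blast
  then show ?thesis using xa_chain_trans[OF _ xa_chain_sym] by blast
qed

lemma xa_dist_triangle: "x \<in> XA \<Longrightarrow> y \<in> XA \<Longrightarrow> z \<in> XA \<Longrightarrow> xa_dist x z \<le> xa_dist x y + xa_dist y z"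
proof -
  assume "x \<in> XA" "y \<in> XA" "z \<in> XA"
  then obtain c1 c2 where "xa_chain x y c1" "xa_chain y z c2" using xa_chain_exists by meson
  then show ?thesis by (rule xa_dist_triangle_chain)
qed

lemma xa_dist_nonneg: "x \<in> XA \<Longrightarrow> y \<in> XA \<Longrightarrow> 0 \<le> xa_dist x y"
  using xa_chain_exists xa_dist_nonneg_chain by meson

lemma step_lipschitz_le_xa_dist:
  assumes "\<And>x y c. xa_step x y c \<Longrightarrow> x \<in> XA \<Longrightarrow> y \<in> XA \<Longrightarrow> g x - g y \<le> c"
    and "x \<in> XA" "y \<in> XA"
  shows "g x - g y \<le> xa_dist x y"
proof -
  obtain c where "xa_chain x y c" using xa_chain_exists assms(2,3) by meson
  moreover have "\<And>x y c. xa_step x y c \<Longrightarrow> g x - g y \<le> c" using assms(1) xa_step_in_XA by blast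
  ultimately show ?thesis using xa_dist_lipschitz_chain by blast
qed

lemma lat_real_axis: "lat (n, 0) = complex_of_real (of_int n)"
  unfolding lat_def by (simp add: complex_eq_iff)

lemma cmod_diff_of_real: "cmod (w - complex_of_real r) = sqrt ((Re w - r)^2 + (Im w)^2)"
  by (simp add: cmod_def)

lemma cmod_diff_real[simp]: "cmod (complex_of_real x - complex_of_real y) = \<bar>x - y\<bar>"
  by (metis norm_of_real of_real_diff)

lemma cmod_diff_real_int[simp]: "cmod (complex_of_real x - complex_of_int y) = \<bar>x - real_of_int y\<bar>"
  by (metis cmod_diff_real of_real_of_int_eq)

section \<open>A ray through a sequence of flats\<close>

text \<open>The flat entered by the ray at time \<open>entry k\<close> is the coset of the word \<open>spine_word k\<close>.\<close>

locale spine_ray =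
  fixes a :: "nat \<Rightarrow> int"
  assumes a_ge_1: "\<And>k. 1 \<le> a k"
begin

primrec spine_word_from :: "nat \<Rightarrow> nat \<Rightarrow> word" where
  "spine_word_from i 0 = []" | "spine_word_from i (Suc n) = ((a i, 0), True) # spine_word_from (Suc i) n"

abbreviation "spine_word k \<equiv> spine_word_from 0 k"

lemma length_spine_word_from[simp]: "length (spine_word_from i n) = n"
  by (induction n arbitrary: i) auto

lemma nth_spine_word_from: "j < n \<Longrightarrow> spine_word_from i n ! j = ((a (i + j), 0), True)"
  by (induction n arbitrary: i j) (auto simp: nth_Cons split: nat.splits)

lemma spine_word_from_Suc: "spine_word_from i (Suc n) = spine_word_from i n @ [((a (i + n), 0), True)]"
  by (induction n arbitrary: i) auto

lemma spine_word_Suc: "spine_word (Suc k) = spine_word k @ [((a k, 0), True)]"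
  using spine_word_from_Suc[of 0 k] by simp

lemma reduced_spine_word_from: "reduced (spine_word_from i n)"
  unfolding reduced_def by (auto simp: nth_spine_word_from)

lemma spine_word_last: "k > 0 \<Longrightarrow> spine_word k \<noteq> [] \<and> snd (last (spine_word k)) = True"
proof -
  assume "k > 0"
  then obtain n where "k = Suc n" by (cases k) auto
  then show ?thesis unfolding \<open>k = Suc n\<close> spine_word_from_Suc[of 0 n] by simp
qed

lemma edge_target_spine_word: "edge_target (spine_word k) p = FP (spine_word k @ [(p, True)]) 0"
proof (cases "k = 0")
  case True then show ?thesis unfolding edge_target_def by simp
next
  case False then show ?thesis using spine_word_last[of k] unfolding edge_target_def by simp
qed

primrec entry :: "nat \<Rightarrow> real" where
  "entry 0 = 0" | "entry (Suc k) = entry k + a k + 1"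

lemma a_ge_1_real: "1 \<le> real_of_int (a k)" using a_ge_1[of k] by simp

lemma entry_Suc_gt: "entry k + a k < entry (Suc k)" by simp

lemma entry_strict_mono: "k < m \<Longrightarrow> entry k < entry m"
proof (rule lift_Suc_mono_less[of entry])
  show "entry n < entry (Suc n)" for n using a_ge_1_real[of n] by simp
qed

lemma entry_mono: "k \<le> m \<Longrightarrow> entry k \<le> entry m"
  using entry_strict_mono by (cases "k = m") (auto intro: less_imp_le)

lemma entry_ge: "real k \<le> entry k"
proof (induction k)
  case (Suc k) then show ?case using a_ge_1[of k] by simp
qed simp

lemma entry_nonneg: "0 \<le> entry k" using entry_ge[of k] by linarith

definition flat_index :: "real \<Rightarrow> nat" where "flat_index s = (LEAST k. s < entry (Suc k))"

lemma flat_index_ex: "\<exists>k. s < entry (Suc k)"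
proof -
  obtain n :: nat where "s < real n" using reals_Archimedean2 by blast
  then show ?thesis using entry_ge[of "Suc n"] by (intro exI[of _ n]) simp
qed

lemma flat_index_bounds: "0 \<le> s \<Longrightarrow> entry (flat_index s) \<le> s \<and> s < entry (Suc (flat_index s))"
proof -
  assume s: "0 \<le> s"
  have 1: "s < entry (Suc (flat_index s))" unfolding flat_index_def using flat_index_ex by (rule LeastI_ex)
  have "entry (flat_index s) \<le> s"
  proof (cases "flat_index s")
    case 0 then show ?thesis using s by simp
  next
    case (Suc j)
    then have "\<not> s < entry (Suc j)" using not_less_Least[of j "\<lambda>k. s < entry (Suc k)"] unfolding flat_index_def by simp
    then show ?thesis using Suc by simp
  qed
  then show ?thesis using 1 by simp
qed

lemma flat_index_eq: "entry k \<le> s \<Longrightarrow> s < entry (Suc k) \<Longrightarrow> flat_index s = k"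
proof -
  assume h: "entry k \<le> s" "s < entry (Suc k)"
  then have s: "0 \<le> s" using entry_nonneg[of k] by linarith
  have p: "entry (flat_index s) \<le> s" "s < entry (Suc (flat_index s))" using flat_index_bounds[OF s] by auto
  show ?thesis
  proof (rule ccontr)
    assume "flat_index s \<noteq> k"
    then consider "flat_index s < k" | "k < flat_index s" by linarith
    then show False
    proof cases
      case 1 then have "entry (Suc (flat_index s)) \<le> entry k" by (intro entry_mono) simp
      then show False using p h by linarith
    next
      case 2 then have "entry (Suc k) \<le> entry (flat_index s)" by (intro entry_mono) simp
      then show False using p h by linarith
    qed
  qed
qed

definition ray :: "real \<Rightarrow> xa_pt" where
  "ray s = (let k = flat_index s in if s \<le> entry k + a k then FP (spine_word k) (complex_of_real (s - entry k))
            else EP (spine_word k) (a k, 0) (s - entry k - a k))"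

lemma ray_in_flat: "entry k \<le> s \<Longrightarrow> s \<le> entry k + a k \<Longrightarrow> ray s = FP (spine_word k) (complex_of_real (s - entry k))"
  unfolding ray_def using flat_index_eq[of k s] entry_Suc_gt[of k] by (simp add: Let_def)

lemma ray_in_edge: "entry k + a k < s \<Longrightarrow> s < entry (Suc k) \<Longrightarrow> ray s = EP (spine_word k) (a k, 0) (s - entry k - a k)"
  unfolding ray_def using flat_index_eq[of k s] entry_nonneg[of k] a_ge_1[of k] by (simp add: Let_def)

lemma ray_cases: "0 \<le> s \<Longrightarrow> (\<exists>k. entry k \<le> s \<and> s \<le> entry k + a k \<and> ray s = FP (spine_word k) (complex_of_real (s - entry k)))
   \<or> (\<exists>k. entry k + a k < s \<and> s < entry (Suc k) \<and> ray s = EP (spine_word k) (a k, 0) (s - entry k - a k))"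
proof -
  assume s: "0 \<le> s"
  let ?k = "flat_index s"
  have p: "entry ?k \<le> s" "s < entry (Suc ?k)" using flat_index_bounds[OF s] by auto
  show ?thesis
  proof (cases "s \<le> entry ?k + a ?k")
    case True then show ?thesis using ray_in_flat p by blast
  next
    case False then show ?thesis using ray_in_edge p by (meson not_le)
  qed
qed

lemma ray_in_XA: "0 \<le> s \<Longrightarrow> ray s \<in> XA"
  using ray_cases[of s] reduced_spine_word_from by (auto simp: XA_def)

lemma ray_0: "ray 0 = xa_o"
  using ray_in_flat[of 0 0] a_ge_1[of 0] unfolding xa_o_def by simp

lemma ray_on_spine_edge:
  assumes "entry k + a k \<le> s" "s \<le> entry (Suc k)"
  shows "ray s \<in> xa_edge (spine_word k) (a k, 0) \<and> epar (spine_word k) (a k, 0) (ray s) = s - entry k - a k"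
proof -
  have tg: "edge_target (spine_word k) (a k, 0) = FP (spine_word (Suc k)) 0" using edge_target_spine_word[of k] spine_word_Suc by simp
  consider "s = entry k + a k" | "s = entry (Suc k)" | "entry k + a k < s" "s < entry (Suc k)" using assms by linarith
  then show ?thesis
  proof cases
    case 1
    then have "ray s = FP (spine_word k) (lat (a k, 0))" using ray_in_flat[of k s] entry_nonneg[of k] a_ge_1[of k] by (simp add: lat_real_axis)
    then show ?thesis using 1 source_in_xa_edge epar_source by simp
  next
    case 2
    then have "ray s = FP (spine_word (Suc k)) 0" using ray_in_flat[of "Suc k" s] a_ge_1_real[of "Suc k"] by simp
    then have "ray s = edge_target (spine_word k) (a k, 0)" using tg by simp
    then show ?thesis using 2 target_in_xa_edge epar_target by simp
  next
    case 3
    then have "ray s = EP (spine_word k) (a k, 0) (s - entry k - a k)" using ray_in_edge by simp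
    moreover have "0 < s - entry k - a k" "s - entry k - a k < 1" using 3 by auto
    ultimately show ?thesis using EP_in_xa_edge epar_EP by simp
  qed
qed

lemma ray_chain_block:
  assumes "entry k \<le> s1" "s1 \<le> s2" "s2 \<le> entry (Suc k)"
  shows "xa_chain (ray s1) (ray s2) (s2 - s1)"
proof -
  have rL: "reduced (spine_word k)" by (rule reduced_spine_word_from)
  have edge: "xa_chain (ray u) (ray v) (v - u)" if "entry k + a k \<le> u" "u \<le> v" "v \<le> entry (Suc k)" for u v
  proof -
    have "xa_step (ray u) (ray v) \<bar>(u - entry k - a k) - (v - entry k - a k)\<bar>"
      using xa_step_edge[OF rL] ray_on_spine_edge[of k u] ray_on_spine_edge[of k v] that by fastforce
    then show ?thesis using xa_chain_single that by fastforce
  qed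
  have flat: "xa_chain (ray u) (ray v) (v - u)" if "entry k \<le> u" "u \<le> v" "v \<le> entry k + a k" for u v
  proof -
    have "ray u = FP (spine_word k) (complex_of_real (u - entry k))"
      and "ray v = FP (spine_word k) (complex_of_real (v - entry k))"
      using ray_in_flat that by auto
    moreover have "cmod (complex_of_real (u - entry k) - complex_of_real (v - entry k)) = v - u"
      using that by (simp del: of_real_diff)
    ultimately show ?thesis using xa_chain_single[OF xa_step_flat[OF rL]] by metis
  qed
  consider "s2 \<le> entry k + a k" | "entry k + a k \<le> s1" | "s1 < entry k + a k" "entry k + a k < s2" by linarith
  then show ?thesis
  proof cases
    case 1 then show ?thesis using flat assms by simp
  next
    case 2 then show ?thesis using edge assms by simp
  next
    case 3
    have "xa_chain (ray s1) (ray (entry k + a k)) (entry k + a k - s1)" using flat 3 assms by simp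
    moreover have "xa_chain (ray (entry k + a k)) (ray s2) (s2 - (entry k + a k))" using edge 3 assms by simp
    ultimately show ?thesis using xa_chain_trans by fastforce
  qed
qed

lemma ray_chain_blocks: "entry k \<le> s1 \<Longrightarrow> s1 \<le> s2 \<Longrightarrow> s2 \<le> entry (k + n) \<Longrightarrow> xa_chain (ray s1) (ray s2) (s2 - s1)"
proof (induction n arbitrary: s1 s2)
  case 0
  then have "s1 = s2" by simp
  then show ?case using xa_chain_refl by simp
next
  case (Suc n)
  show ?case
  proof (cases "s2 \<le> entry (k + n)")
    case True then show ?thesis using Suc by blast
  next
    case False
    show ?thesis
    proof (cases "s1 \<le> entry (k + n)")
      case True
      have "xa_chain (ray s1) (ray (entry (k + n))) (entry (k + n) - s1)" using Suc.IH Suc.prems True by simp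
      moreover have "xa_chain (ray (entry (k + n))) (ray s2) (s2 - entry (k + n))"
        using ray_chain_block[of "k + n" "entry (k + n)" s2] False Suc.prems by simp
      ultimately show ?thesis using xa_chain_trans by fastforce
    next
      case F2: False
      then show ?thesis using ray_chain_block[of "k + n" s1 s2] Suc.prems by simp
    qed
  qed
qed

lemma ray_chain: "0 \<le> s1 \<Longrightarrow> s1 \<le> s2 \<Longrightarrow> xa_chain (ray s1) (ray s2) (s2 - s1)"
proof -
  assume h: "0 \<le> s1" "s1 \<le> s2"
  obtain n :: nat where "s2 < real n" using reals_Archimedean2 by blast
  then have "s2 \<le> entry (0 + n)" using entry_ge[of n] by simp
  then show ?thesis using ray_chain_blocks[of 0 s1 s2 n] h by simp
qed

lemma xa_dist_ray_le: "0 \<le> s1 \<Longrightarrow> 0 \<le> s2 \<Longrightarrow> xa_dist (ray s1) (ray s2) \<le> \<bar>s1 - s2\<bar>"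
proof (cases "s1 \<le> s2")
  case True
  assume "0 \<le> s1" "0 \<le> s2"
  then show ?thesis using xa_dist_le_chain[OF ray_chain[of s1 s2]] True by simp
next
  case False
  assume "0 \<le> s1" "0 \<le> s2"
  then show ?thesis using xa_dist_le_chain[OF xa_chain_sym[OF ray_chain[of s2 s1]]] False by simp
qed

definition flat_dist :: "nat \<Rightarrow> complex \<Rightarrow> real \<Rightarrow> real" where
  "flat_dist k w s = (if s < entry k then cmod w + (entry k - s)
     else if s \<le> entry k + a k then cmod (w - complex_of_real (s - entry k))
     else cmod (w - complex_of_real (a k)) + (s - entry k - a k))"

lemma flat_dist_lipschitz: "flat_dist k w s - flat_dist k w' s \<le> cmod (w - w')"
proof -
  have "\<And>v. cmod (w - v) - cmod (w' - v) \<le> cmod (w - w')"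
  proof -
    fix v
    have "cmod (w - v) - cmod (w' - v) \<le> cmod ((w - v) - (w' - v))" by (rule norm_triangle_ineq2)
    then show "cmod (w - v) - cmod (w' - v) \<le> cmod (w - w')" by simp
  qed
  moreover have "cmod w - cmod w' \<le> cmod (w - w')" by (rule norm_triangle_ineq2)
  ultimately show ?thesis unfolding flat_dist_def by (auto split: if_splits)
qed

lemma flat_dist_before: "s < entry k \<Longrightarrow> flat_dist k w s = cmod w + (entry k - s)"
  unfolding flat_dist_def by simp

lemma flat_dist_during: "entry k \<le> s \<Longrightarrow> s \<le> entry k + a k \<Longrightarrow> flat_dist k w s = cmod (w - complex_of_real (s - entry k))"
  unfolding flat_dist_def by simp

lemma flat_dist_after: "entry k + a k < s \<Longrightarrow> flat_dist k w s = cmod (w - complex_of_int (a k)) + (s - entry k - a k)"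
  unfolding flat_dist_def using a_ge_1_real[of k] by auto

lemma flat_dist_on_axis: "entry k \<le> s0 \<Longrightarrow> s0 \<le> entry k + a k \<Longrightarrow> flat_dist k (complex_of_real (s0 - entry k)) s = \<bar>s0 - s\<bar>"
proof -
  assume h: "entry k \<le> s0" "s0 \<le> entry k + a k"
  consider "s < entry k" | "entry k \<le> s \<and> s \<le> entry k + a k" | "entry k + a k < s" by linarith
  then show ?thesis
  proof cases
    case 1 then show ?thesis using h by (simp add: flat_dist_before)
  next
    case 2 then show ?thesis using h by (simp add: flat_dist_during del: of_real_diff)
  next
    case 3
    have e1: "flat_dist k (complex_of_real (s0 - entry k)) s = cmod (complex_of_real (s0 - entry k) - complex_of_int (a k)) + (s - entry k - a k)"
      by (rule flat_dist_after[OF 3])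
    have e2: "cmod (complex_of_real (s0 - entry k) - complex_of_int (a k)) = \<bar>s0 - entry k - a k\<bar>" by (rule cmod_diff_real_int)
    show ?thesis using e1 e2 h 3 by linarith
  qed
qed

lemma flat_dist_nonneg: "0 \<le> flat_dist k w s"
  unfolding flat_dist_def by auto

lemma entry_le_flat_dist_0: "entry k \<le> flat_dist k w 0"
proof (cases "0 < entry k")
  case True then show ?thesis by (simp add: flat_dist_before)
next
  case False then show ?thesis using entry_nonneg[of k] flat_dist_nonneg[of k w 0] by linarith
qed

definition seg_clamp :: "nat \<Rightarrow> complex \<Rightarrow> real" where "seg_clamp k w = max 0 (min (real_of_int (a k)) (Re w))"

definition seg_dist :: "nat \<Rightarrow> complex \<Rightarrow> real" where "seg_dist k w = cmod (w - complex_of_real (seg_clamp k w))"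

lemma seg_clamp_range: "0 \<le> seg_clamp k w \<and> seg_clamp k w \<le> a k"
  unfolding seg_clamp_def using a_ge_1[of k] by auto

lemma seg_dist_min: fixes r :: real shows "0 \<le> r \<Longrightarrow> r \<le> a k \<Longrightarrow> seg_dist k w \<le> cmod (w - complex_of_real r) \<and>
    (cmod (w - complex_of_real r) = seg_dist k w \<longrightarrow> r = seg_clamp k w)"
proof -
  assume r: "0 \<le> r" "r \<le> a k"
  have ab: "\<bar>Re w - seg_clamp k w\<bar> \<le> \<bar>Re w - r\<bar> \<and> (\<bar>Re w - seg_clamp k w\<bar> = \<bar>Re w - r\<bar> \<longrightarrow> r = seg_clamp k w)"
  proof -
    consider "Re w < 0" | "0 \<le> Re w \<and> Re w \<le> a k" | "a k < Re w" by linarith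
    then show ?thesis
    proof cases
      case 1 then have "seg_clamp k w = 0" unfolding seg_clamp_def using r by simp
      then show ?thesis using 1 r by (simp add: abs_if)
    next
      case 2 then have "seg_clamp k w = Re w" unfolding seg_clamp_def by simp
      then show ?thesis by simp
    next
      case 3 then have "seg_clamp k w = a k" unfolding seg_clamp_def using r by simp
      then show ?thesis using 3 r by (simp add: abs_if)
    qed
  qed
  have sq: "(Re w - seg_clamp k w)^2 \<le> (Re w - r)^2" using ab abs_le_square_iff by blast
  have 1: "seg_dist k w \<le> cmod (w - complex_of_real r)"
    unfolding seg_dist_def cmod_diff_of_real using sq by (intro real_sqrt_le_mono) simp
  have 2: "cmod (w - complex_of_real r) = seg_dist k w \<longrightarrow> r = seg_clamp k w"
  proof
    assume "cmod (w - complex_of_real r) = seg_dist k w"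
    then have "(Re w - r)^2 = (Re w - seg_clamp k w)^2"
      unfolding seg_dist_def cmod_diff_of_real by (simp add: real_sqrt_eq_iff)
    then have "\<bar>Re w - r\<bar> = \<bar>Re w - seg_clamp k w\<bar>" by (metis real_sqrt_abs)
    then show "r = seg_clamp k w" using ab by simp
  qed
  show ?thesis using 1 2 by blast
qed

lemma flat_dist_min: "0 \<le> s \<Longrightarrow> seg_dist k w \<le> flat_dist k w s \<and> (flat_dist k w s = seg_dist k w \<longrightarrow> s = entry k + seg_clamp k w)"
proof -
  assume s: "0 \<le> s"
  have a0: "0 \<le> real_of_int (a k)" using a_ge_1_real[of k] by simp
  consider "s < entry k" | "entry k \<le> s \<and> s \<le> entry k + a k" | "entry k + a k < s" by linarith
  then show ?thesis
  proof cases
    case 1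
    have "seg_dist k w \<le> cmod (w - complex_of_real 0)" using seg_dist_min[of 0 k w] a0 by simp
    then have "seg_dist k w < flat_dist k w s" using 1 by (simp add: flat_dist_before)
    then show ?thesis by simp
  next
    case 2
    then show ?thesis using seg_dist_min[of "s - entry k" k w] by (simp add: flat_dist_during del: of_real_diff)
  next
    case 3
    have "seg_dist k w \<le> cmod (w - complex_of_int (a k))" using seg_dist_min[of "real_of_int (a k)" k w] a0 by simp
    then have "seg_dist k w < flat_dist k w s" using 3 by (simp add: flat_dist_after)
    then show ?thesis by simp
  qed
qed

lemma flat_dist_at_clamp: "flat_dist k w (entry k + seg_clamp k w) = seg_dist k w"
  using seg_clamp_range[of k w] unfolding seg_dist_def by (simp add: flat_dist_during)

lemma spine_flat_in_XA: "FP (spine_word k) z \<in> XA"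
  unfolding XA_def using reduced_spine_word_from by auto

lemma chain_spine_flat_to_ray: "0 \<le> s \<Longrightarrow> xa_chain (FP (spine_word k) w) (ray s) (flat_dist k w s)"
proof -
  assume s: "0 \<le> s"
  have rL: "reduced (spine_word k)" by (rule reduced_spine_word_from)
  consider "s < entry k" | "entry k \<le> s" "s \<le> entry k + a k" | "entry k + a k < s" by linarith
  then show ?thesis
  proof cases
    case 1
    have g: "ray (entry k) = FP (spine_word k) 0" using ray_in_flat[of k "entry k"] a_ge_1_real[of k] by simp
    have "xa_chain (FP (spine_word k) w) (FP (spine_word k) 0) (cmod (w - 0))" by (rule xa_chain_single[OF xa_step_flat[OF rL]])
    moreover have "xa_chain (ray (entry k)) (ray s) (entry k - s)" using xa_chain_sym[OF ray_chain[of s "entry k"]] s 1 by simp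
    ultimately have "xa_chain (FP (spine_word k) w) (ray s) (cmod w + (entry k - s))" using xa_chain_trans g by fastforce
    then show ?thesis using 1 flat_dist_before by simp
  next
    case 2
    have "xa_chain (FP (spine_word k) w) (FP (spine_word k) (complex_of_real (s - entry k))) (cmod (w - complex_of_real (s - entry k)))"
      by (rule xa_chain_single[OF xa_step_flat[OF rL]])
    then show ?thesis using 2 ray_in_flat[of k s] flat_dist_during[of k s w] by (simp del: of_real_diff)
  next
    case 3
    have g: "ray (entry k + a k) = FP (spine_word k) (of_int (a k))" using ray_in_flat[of k "entry k + a k"] a_ge_1_real[of k] by simp
    have "xa_chain (FP (spine_word k) w) (FP (spine_word k) (of_int (a k))) (cmod (w - of_int (a k)))" by (rule xa_chain_single[OF xa_step_flat[OF rL]])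
    moreover have "xa_chain (ray (entry k + a k)) (ray s) (s - (entry k + a k))"
      using ray_chain[of "entry k + a k" s] 3 entry_nonneg[of k] a_ge_1_real[of k] by simp
    ultimately have cf: "xa_chain (FP (spine_word k) w) (ray s) (cmod (w - of_int (a k)) + (s - (entry k + a k)))"
      using xa_chain_trans g by fastforce
    have e: "flat_dist k w s = cmod (w - of_int (a k)) + (s - (entry k + a k))" using flat_dist_after[OF 3] by simp
    show ?thesis unfolding e by (rule cf)
  qed
qed

fun spine_prefix :: "nat \<Rightarrow> word \<Rightarrow> nat" where
  "spine_prefix i [] = 0"
| "spine_prefix i (x # r) = (if x = ((a i, 0), True) then Suc (spine_prefix (Suc i) r) else 0)"

definition is_spine :: "word \<Rightarrow> bool" where "is_spine M \<longleftrightarrow> spine_prefix 0 M = length M"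

lemma spine_prefix_append: "spine_prefix i (M @ X) = (if spine_prefix i M = length M then length M + spine_prefix (i + length M) X else spine_prefix i M)"
  by (induction M arbitrary: i) auto

lemma spine_prefix_le: "spine_prefix i M \<le> length M"
  by (induction M arbitrary: i) auto

lemma take_spine_prefix: "take (spine_prefix i M) M = spine_word_from i (spine_prefix i M)"
  by (induction M arbitrary: i) auto

lemma spine_prefix_spine_word_from[simp]: "spine_prefix i (spine_word_from i n) = n"
  by (induction n arbitrary: i) auto

lemma is_spine_spine_word[simp]: "is_spine (spine_word k)"
  unfolding is_spine_def by simp

lemma is_spine_eq: "is_spine M \<Longrightarrow> M = spine_word (length M)"
  unfolding is_spine_def using take_spine_prefix[of 0 M] by simp

lemma spine_prefix_less: "\<not> is_spine L \<Longrightarrow> spine_prefix 0 L < length L"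
  using spine_prefix_le[of 0 L] unfolding is_spine_def by simp

lemma is_spine_last: "is_spine L \<Longrightarrow> L \<noteq> [] \<Longrightarrow> snd (last L) = True"
  using is_spine_eq[of L] spine_word_last[of "length L"] by (metis length_greater_0_conv)

lemma spine_prefix_snoc: "spine_prefix 0 (spine_word k @ [(p, True)]) = (if p = (a k, 0) then Suc k else k)"
  using spine_prefix_append[of 0 "spine_word k" "[(p, True)]"] by simp

lemma spine_prefix_butlast:
  assumes "L \<noteq> []" "snd (last L) = False"
  shows "spine_prefix 0 (butlast L) = spine_prefix 0 L"
proof -
  have L: "L = butlast L @ [last L]" using assms by simp
  have 0: "spine_prefix j [last L] = 0" for j using assms(2) by (cases "last L") auto
  have "spine_prefix 0 L = spine_prefix 0 (butlast L @ [last L])" using L by metis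
  also have "\<dots> = spine_prefix 0 (butlast L)" unfolding spine_prefix_append using 0 by simp
  finally show ?thesis by simp
qed

lemma not_spine_append: "\<not> is_spine L \<Longrightarrow> spine_prefix 0 (L @ X) = spine_prefix 0 L \<and> \<not> is_spine (L @ X) \<and>
    (L @ X) ! spine_prefix 0 L = L ! spine_prefix 0 L"
  using spine_prefix_less[of L] spine_prefix_append[of 0 L X] unfolding is_spine_def by (auto simp: nth_append)

text \<open>A point not interior to an edge of the ray lies in a flat \<open>spine_word k\<close> or in the subtree
  hanging off such a flat at a single lattice point; \<open>region\<close> is this \<open>k\<close> and \<open>anchor\<close> the point of
  the flat (resp. the attaching lattice point).\<close>

fun word_of :: "xa_pt \<Rightarrow> word" where "word_of (FP M z) = M" | "word_of (EP M p t) = M"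

definition anchor :: "xa_pt \<Rightarrow> complex" where
  "anchor x = (if is_spine (word_of x) then (case x of FP M z \<Rightarrow> z | EP M p t \<Rightarrow> lat p)
            else lat (fst (word_of x ! spine_prefix 0 (word_of x))))"

definition on_spine_edge :: "xa_pt \<Rightarrow> bool" where
  "on_spine_edge x = (case x of FP M z \<Rightarrow> False | EP M p t \<Rightarrow> is_spine M \<and> p = (a (length M), 0))"

definition region :: "xa_pt \<Rightarrow> nat" where "region x = spine_prefix 0 (word_of x)"

definition anchor_pt :: "xa_pt \<Rightarrow> xa_pt" where "anchor_pt x = FP (spine_word (region x)) (anchor x)"

definition edge_time :: "xa_pt \<Rightarrow> real" where
  "edge_time x = (case x of EP M p t \<Rightarrow> entry (length M) + a (length M) + t | FP M z \<Rightarrow> 0)"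

lemma region_FP[simp]: "region (FP M z) = spine_prefix 0 M" unfolding region_def by simp

lemma region_EP[simp]: "region (EP M p t) = spine_prefix 0 M" unfolding region_def by simp

lemma on_spine_edge_FP[simp]: "on_spine_edge (FP M z) = False" unfolding on_spine_edge_def by simp

lemma on_spine_edge_EP[simp]: "on_spine_edge (EP M p t) = (is_spine M \<and> p = (a (length M), 0))" unfolding on_spine_edge_def by simp

lemma anchor_FP[simp]: "anchor (FP M z) = (if is_spine M then z else lat (fst (M ! spine_prefix 0 M)))"
  unfolding anchor_def by simp

lemma anchor_EP[simp]: "anchor (EP M p t) = (if is_spine M then lat p else lat (fst (M ! spine_prefix 0 M)))"
  unfolding anchor_def by simp

definition edge_anchor :: "word \<Rightarrow> int \<times> int \<Rightarrow> complex" where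
  "edge_anchor L p = (if is_spine L then lat p else lat (fst (L ! spine_prefix 0 L)))"

lemma xa_edge_cases: "u \<in> xa_edge L p \<Longrightarrow> u = FP L (lat p) \<or> u = edge_target L p \<or> (\<exists>t. u = EP L p t \<and> 0 < t \<and> t < 1)"
  unfolding xa_edge_def by auto

lemma edge_target_spine:
  "is_spine L \<Longrightarrow> edge_target L p = FP (L @ [(p, True)]) 0"
  using edge_target_spine_word[of "length L" p] is_spine_eq[of L] by metis

lemma branch_word_not_spine:
  assumes "is_spine L" "p \<noteq> (a (length L), 0)"
  shows "spine_prefix 0 (L @ [(p, True)]) = length L" "\<not> is_spine (L @ [(p, True)])"
proof -
  show "spine_prefix 0 (L @ [(p, True)]) = length L"
    using spine_prefix_snoc[of "length L" p] assms is_spine_eq[OF assms(1)] by metis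
  then show "\<not> is_spine (L @ [(p, True)])" unfolding is_spine_def by simp
qed

lemma return_word_spine_prefix:
  assumes "L \<noteq> []" "snd (last L) = False"
  shows "\<not> is_spine L" "spine_prefix 0 (butlast L) = spine_prefix 0 L"
    "is_spine (butlast L) \<longleftrightarrow> Suc (spine_prefix 0 L) = length L"
proof -
  show ns: "\<not> is_spine L" using assms is_spine_last by auto
  show sb: "spine_prefix 0 (butlast L) = spine_prefix 0 L" using assms by (rule spine_prefix_butlast)
  show "is_spine (butlast L) \<longleftrightarrow> Suc (spine_prefix 0 L) = length L"
    using sb spine_prefix_less[OF ns] unfolding is_spine_def by auto
qed

lemma off_spine_edge_target_region:
  assumes "\<not> (is_spine L \<and> p = (a (length L), 0))"
  shows "region (edge_target L p) = spine_prefix 0 L \<and> anchor (edge_target L p) = edge_anchor L p"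
proof (cases "L \<noteq> [] \<and> snd (last L) = False \<and> p = (0, 0)")
  case True
  then have u: "edge_target L p = FP (butlast L) (lat (fst (last L)))" unfolding edge_target_def by simp
  note R = return_word_spine_prefix[of L]
  have lt: "spine_prefix 0 L < length L" using spine_prefix_less R(1) True by blast
  show ?thesis
  proof (cases "Suc (spine_prefix 0 L) = length L")
    case True
    then have "L ! spine_prefix 0 L = last L" by (metis diff_Suc_1 last_conv_nth list.size(3) nat.distinct(1))
    then show ?thesis using u R True \<open>L \<noteq> [] \<and> _\<close> unfolding edge_anchor_def by simp
  next
    case False
    then have "butlast L ! spine_prefix 0 L = L ! spine_prefix 0 L" using lt by (simp add: nth_butlast)
    then show ?thesis using u R False \<open>L \<noteq> [] \<and> _\<close> unfolding edge_anchor_def by simp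
  qed
next
  case False
  then have u: "edge_target L p = FP (L @ [(p, True)]) 0" unfolding edge_target_def by auto
  show ?thesis
  proof (cases "is_spine L")
    case True
    moreover have "spine_prefix 0 L = length L" using True unfolding is_spine_def .
    ultimately show ?thesis using u branch_word_not_spine[of L p] assms unfolding edge_anchor_def
      by (simp add: nth_append)
  next
    case False
    then show ?thesis using u not_spine_append[OF False, of "[(p, True)]"] unfolding edge_anchor_def by simp
  qed
qed

lemma off_spine_edge_region:
  assumes "\<not> (is_spine L \<and> p = (a (length L), 0))" "u \<in> xa_edge L p"
  shows "\<not> on_spine_edge u \<and> region u = spine_prefix 0 L \<and> anchor u = edge_anchor L p"
  using xa_edge_cases[OF assms(2)] off_spine_edge_target_region[OF assms(1)] edge_target_FP[of L p] assms(1)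
  unfolding edge_anchor_def by auto

lemma spine_edge_cases:
  assumes "u \<in> xa_edge (spine_word k) (a k, 0)"
  shows "(u = FP (spine_word k) (of_int (a k)) \<and> epar (spine_word k) (a k, 0) u = 0) \<or>
         (u = FP (spine_word (Suc k)) 0 \<and> epar (spine_word k) (a k, 0) u = 1) \<or>
         (\<exists>t. u = EP (spine_word k) (a k, 0) t \<and> 0 < t \<and> t < 1 \<and> epar (spine_word k) (a k, 0) u = t)"
proof -
  have tg: "edge_target (spine_word k) (a k, 0) = FP (spine_word (Suc k)) 0" using edge_target_spine_word[of k] spine_word_Suc by simp
  have l: "lat (a k, 0) = of_int (a k)" using lat_real_axis by simp
  show ?thesis using xa_edge_cases[OF assms] epar_source[of "spine_word k" "(a k, 0)"] epar_target[of "spine_word k" "(a k, 0)"]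
      epar_EP[of "spine_word k" "(a k, 0)"] tg l by metis
qed

lemma xa_step_cases:
  assumes "xa_step x y c"
  shows "(\<exists>L z w. reduced L \<and> x = FP L z \<and> y = FP L w \<and> c = cmod (z - w)) \<or>
    (\<exists>k. x \<in> xa_edge (spine_word k) (a k, 0) \<and> y \<in> xa_edge (spine_word k) (a k, 0) \<and>
         c = \<bar>epar (spine_word k) (a k, 0) x - epar (spine_word k) (a k, 0) y\<bar>) \<or>
    (\<exists>L p. reduced L \<and> \<not> (is_spine L \<and> p = (a (length L), 0)) \<and> x \<in> xa_edge L p \<and> y \<in> xa_edge L p \<and>
         c = \<bar>epar L p x - epar L p y\<bar>)"
  using assms unfolding xa_step_def by (metis is_spine_eq)

lemma anchor_pt_in_XA: "anchor_pt x \<in> XA"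
  unfolding anchor_pt_def XA_def using reduced_spine_word_from by auto

text \<open>Every path from \<open>x\<close> to the ray passes through \<open>anchor_pt x\<close>, whence the formula for the
  distance from \<open>x\<close> to \<open>ray s\<close> (lemma \<open>xa_dist_ray_eq\<close>).\<close>

definition ray_dist :: "real \<Rightarrow> xa_pt \<Rightarrow> real" where
  "ray_dist s x = (if on_spine_edge x then \<bar>edge_time x - s\<bar> else xa_dist x (anchor_pt x) + flat_dist (region x) (anchor x) s)"

lemma ray_dist_spine_flat: "ray_dist s (FP (spine_word k) z) = flat_dist k z s"
  unfolding ray_dist_def anchor_pt_def by (simp add: xa_dist_refl)

lemma ray_dist_same_anchor:
  assumes "\<not> on_spine_edge x" "\<not> on_spine_edge y" "region x = region y" "anchor x = anchor y" "xa_step x y c"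
  shows "ray_dist s x - ray_dist s y \<le> c"
proof -
  have xy: "x \<in> XA" "y \<in> XA" using xa_step_in_XA[OF assms(5)] by auto
  have "xa_dist x (anchor_pt x) \<le> xa_dist x y + xa_dist y (anchor_pt x)" using xa_dist_triangle[OF xy anchor_pt_in_XA] .
  moreover have "xa_dist x y \<le> c" using xa_dist_le_step[OF assms(5)] .
  moreover have "anchor_pt y = anchor_pt x" unfolding anchor_pt_def using assms(3,4) by simp
  ultimately show ?thesis unfolding ray_dist_def using assms(1-4) by simp
qed

lemma ray_dist_spine_edge:
  assumes "u \<in> xa_edge (spine_word k) (a k, 0)"
  shows "ray_dist s u = \<bar>entry k + a k + epar (spine_word k) (a k, 0) u - s\<bar>"
proof -
  consider "u = FP (spine_word k) (of_int (a k))" "epar (spine_word k) (a k, 0) u = 0"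
    | "u = FP (spine_word (Suc k)) 0" "epar (spine_word k) (a k, 0) u = 1"
    | t where "u = EP (spine_word k) (a k, 0) t" "epar (spine_word k) (a k, 0) u = t"
    using spine_edge_cases[OF assms] by blast
  then show ?thesis
  proof cases
    case 1
    have "of_int (a k) = complex_of_real (entry k + a k - entry k)" by simp
    then have "ray_dist s u = flat_dist k (complex_of_real (entry k + a k - entry k)) s" using 1 ray_dist_spine_flat by metis
    also have "\<dots> = \<bar>entry k + a k - s\<bar>" by (rule flat_dist_on_axis) (use a_ge_1_real[of k] in auto)
    finally show ?thesis using 1 by simp
  next
    case 2
    have "(0::complex) = complex_of_real (entry (Suc k) - entry (Suc k))" by simp
    then have "ray_dist s u = flat_dist (Suc k) (complex_of_real (entry (Suc k) - entry (Suc k))) s" using 2 ray_dist_spine_flat by metis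
    also have "\<dots> = \<bar>entry (Suc k) - s\<bar>" by (rule flat_dist_on_axis) (use a_ge_1_real[of "Suc k"] in auto)
    finally show ?thesis using 2 by simp
  next
    case 3
    then show ?thesis unfolding ray_dist_def edge_time_def by simp
  qed
qed

lemma ray_dist_lipschitz:
  assumes "xa_step x y c"
  shows "ray_dist s x - ray_dist s y \<le> c"
proof -
  consider (F) L z w where "reduced L" "x = FP L z" "y = FP L w" "c = cmod (z - w)"
    | (S) k where "x \<in> xa_edge (spine_word k) (a k, 0)" "y \<in> xa_edge (spine_word k) (a k, 0)"
         "c = \<bar>epar (spine_word k) (a k, 0) x - epar (spine_word k) (a k, 0) y\<bar>"
    | (O) L p where "\<not> (is_spine L \<and> p = (a (length L), 0))" "x \<in> xa_edge L p" "y \<in> xa_edge L p"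
    using xa_step_cases[OF assms] by blast
  then show ?thesis
  proof cases
    case F
    show ?thesis
    proof (cases "is_spine L")
      case True
      then have L: "L = spine_word (length L)" by (rule is_spine_eq)
      then have "ray_dist s x - ray_dist s y = flat_dist (length L) z s - flat_dist (length L) w s" using F ray_dist_spine_flat by metis
      then show ?thesis using flat_dist_lipschitz F by simp
    next
      case False
      then show ?thesis using ray_dist_same_anchor[OF _ _ _ _ assms] F by simp
    qed
  next
    case S
    then show ?thesis using ray_dist_spine_edge[OF S(1), of s] ray_dist_spine_edge[OF S(2), of s] by linarith
  next
    case O
    then show ?thesis using off_spine_edge_region[OF O(1,2)] off_spine_edge_region[OF O(1,3)] ray_dist_same_anchor[OF _ _ _ _ assms] by simp
  qed
qed

lemma ray_dist_ray: "0 \<le> u \<Longrightarrow> ray_dist s (ray u) = \<bar>u - s\<bar>"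
proof -
  assume "0 \<le> u"
  then consider k where "entry k \<le> u" "u \<le> entry k + a k" "ray u = FP (spine_word k) (complex_of_real (u - entry k))"
    | k where "entry k + a k < u" "u < entry (Suc k)" "ray u = EP (spine_word k) (a k, 0) (u - entry k - a k)"
    using ray_cases by blast
  then show ?thesis
  proof cases
    case 1 then show ?thesis using ray_dist_spine_flat flat_dist_on_axis by simp
  next
    case 2 then show ?thesis unfolding ray_dist_def edge_time_def by simp
  qed
qed

lemma ray_dist_le_xa_dist: "x \<in> XA \<Longrightarrow> 0 \<le> s \<Longrightarrow> ray_dist s x \<le> xa_dist x (ray s)"
  using step_lipschitz_le_xa_dist[of "ray_dist s" x "ray s"] ray_dist_lipschitz ray_in_XA ray_dist_ray by fastforce

lemma xa_dist_le_ray_dist: "x \<in> XA \<Longrightarrow> 0 \<le> s \<Longrightarrow> xa_dist x (ray s) \<le> ray_dist s x"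
proof -
  assume x: "x \<in> XA" and s: "0 \<le> s"
  show ?thesis
  proof (cases "on_spine_edge x")
    case True
    then obtain M p t where xe: "x = EP M p t" "is_spine M" "p = (a (length M), 0)"
      unfolding on_spine_edge_def by (cases x) auto
    then have t: "0 < t" "t < 1" using x unfolding XA_def by auto
    obtain k where M: "M = spine_word k" using is_spine_eq[OF xe(2)] by blast
    have xk: "x = EP (spine_word k) (a k, 0) t" using xe M by simp
    have "x = ray (entry k + a k + t)" using ray_in_edge[of k "entry k + a k + t"] t xk by simp
    moreover have "edge_time x = entry k + a k + t" using xk unfolding edge_time_def by simp
    moreover have "0 \<le> entry k + a k + t" using entry_nonneg[of k] a_ge_1_real[of k] t by simp
    ultimately show ?thesis unfolding ray_dist_def using True xa_dist_ray_le s by simp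
  next
    case False
    have "xa_dist x (ray s) \<le> xa_dist x (anchor_pt x) + xa_dist (anchor_pt x) (ray s)"
      using xa_dist_triangle[OF x anchor_pt_in_XA ray_in_XA[OF s]] .
    moreover have "xa_dist (anchor_pt x) (ray s) \<le> flat_dist (region x) (anchor x) s"
      unfolding anchor_pt_def using xa_dist_le_chain[OF chain_spine_flat_to_ray[OF s]] .
    ultimately show ?thesis unfolding ray_dist_def using False by simp
  qed
qed

lemma xa_dist_ray_eq: "x \<in> XA \<Longrightarrow> 0 \<le> s \<Longrightarrow> xa_dist x (ray s) = ray_dist s x"
  using xa_dist_le_ray_dist ray_dist_le_xa_dist by (meson order.antisym)

declare spine_word_from.simps(2)[simp del]

definition proj_time :: "xa_pt \<Rightarrow> real" where
  "proj_time x = (if on_spine_edge x then edge_time x else entry (region x) + seg_clamp (region x) (anchor x))"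

definition ray_setdist :: "xa_pt \<Rightarrow> real" where
  "ray_setdist x = (if on_spine_edge x then 0 else xa_dist x (anchor_pt x) + seg_dist (region x) (anchor x))"

definition ray_image :: "xa_pt set" where "ray_image = ray ` {0..}"

lemma on_spine_edge_ray:
  assumes "x \<in> XA" "on_spine_edge x"
  shows "x = ray (edge_time x) \<and> 0 \<le> edge_time x"
proof -
  obtain M p t where xe: "x = EP M p t" "is_spine M" "p = (a (length M), 0)"
    using assms(2) unfolding on_spine_edge_def by (cases x) auto
  then have t: "0 < t" "t < 1" using assms(1) unfolding XA_def by auto
  obtain k where M: "M = spine_word k" using is_spine_eq[OF xe(2)] by blast
  have xk: "x = EP (spine_word k) (a k, 0) t" using xe M by simp
  have "x = ray (entry k + a k + t)" using ray_in_edge[of k "entry k + a k + t"] t xk by simp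
  moreover have "edge_time x = entry k + a k + t" using xk unfolding edge_time_def by simp
  moreover have "0 \<le> entry k + a k + t" using entry_nonneg[of k] a_ge_1_real[of k] t by simp
  ultimately show ?thesis by simp
qed

lemma ray_dist_min:
  assumes "x \<in> XA" "0 \<le> s"
  shows "ray_setdist x \<le> ray_dist s x \<and> (ray_dist s x = ray_setdist x \<longrightarrow> s = proj_time x)"
proof (cases "on_spine_edge x")
  case True then show ?thesis unfolding ray_setdist_def ray_dist_def proj_time_def by auto
next
  case False then show ?thesis unfolding ray_setdist_def ray_dist_def proj_time_def using flat_dist_min[OF assms(2)] by auto
qed

lemma proj_time_nonneg: "x \<in> XA \<Longrightarrow> 0 \<le> proj_time x"
proof (cases "on_spine_edge x")
  case True
  assume "x \<in> XA"
  then show ?thesis using on_spine_edge_ray[OF _ True] unfolding proj_time_def using True by simp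
next
  case False
  have "0 \<le> entry (region x)" "0 \<le> seg_clamp (region x) (anchor x)" using entry_nonneg seg_clamp_range by auto
  then show ?thesis unfolding proj_time_def using False by simp
qed

lemma ray_dist_proj_time: "ray_dist (proj_time x) x = ray_setdist x"
  unfolding ray_dist_def ray_setdist_def proj_time_def using flat_dist_at_clamp by simp

lemma ray_setdist_le_xa_dist: "x \<in> XA \<Longrightarrow> 0 \<le> s \<Longrightarrow> ray_setdist x \<le> xa_dist x (ray s)"
  using ray_dist_min xa_dist_ray_eq by simp

lemma proj_time_unique: "x \<in> XA \<Longrightarrow> 0 \<le> s \<Longrightarrow> xa_dist x (ray s) \<le> ray_setdist x \<Longrightarrow> s = proj_time x"
proof -
  assume h: "x \<in> XA" "0 \<le> s" "xa_dist x (ray s) \<le> ray_setdist x"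
  have "ray_setdist x \<le> ray_dist s x" "ray_dist s x = ray_setdist x \<longrightarrow> s = proj_time x" using ray_dist_min[OF h(1,2)] by auto
  moreover have "xa_dist x (ray s) = ray_dist s x" using xa_dist_ray_eq[OF h(1,2)] .
  ultimately show ?thesis using h(3) by linarith
qed

lemma xa_dist_ray_proj_time: "x \<in> XA \<Longrightarrow> xa_dist x (ray (proj_time x)) = ray_setdist x"
  using xa_dist_ray_eq proj_time_nonneg ray_dist_proj_time by simp

lemma ray_setdist_nonneg: "x \<in> XA \<Longrightarrow> 0 \<le> ray_setdist x"
proof -
  assume x: "x \<in> XA"
  have "0 \<le> xa_dist x (ray (proj_time x))" using xa_dist_nonneg[OF x ray_in_XA[OF proj_time_nonneg[OF x]]] .
  then show ?thesis using xa_dist_ray_proj_time[OF x] by simp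
qed

lemma setdist_ray_image: "x \<in> XA \<Longrightarrow> setdist_d xa_dist x ray_image = ray_setdist x"
  unfolding setdist_d_def ray_image_def
proof -
  assume x: "x \<in> XA"
  have "(\<lambda>z. xa_dist x z) ` ray ` {0..} = (\<lambda>s. xa_dist x (ray s)) ` {0..}" by (simp add: image_image)
  moreover have "Inf ((\<lambda>s. xa_dist x (ray s)) ` {0..}) = ray_setdist x"
  proof (rule cInf_eq_minimum)
    show "ray_setdist x \<in> (\<lambda>s. xa_dist x (ray s)) ` {0..}"
    proof (rule image_eqI[of _ _ "proj_time x"])
      show "ray_setdist x = xa_dist x (ray (proj_time x))" using xa_dist_ray_proj_time[OF x] by simp
      show "proj_time x \<in> {0..}" using proj_time_nonneg[OF x] by simp
    qed
  next
    fix v assume "v \<in> (\<lambda>s. xa_dist x (ray s)) ` {0..}"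
    then show "ray_setdist x \<le> v" using ray_setdist_le_xa_dist[OF x] by auto
  qed
  ultimately show "Inf ((\<lambda>z. xa_dist x z) ` ray ` {0..}) = ray_setdist x" by simp
qed

lemma proj_ray_image: "x \<in> XA \<Longrightarrow> proj_d xa_dist x ray_image = {ray (proj_time x)}"
proof -
  assume x: "x \<in> XA"
  have "ray (proj_time x) \<in> ray_image" unfolding ray_image_def using proj_time_nonneg[OF x] by simp
  moreover have "z = ray (proj_time x)" if "z \<in> ray_image" "xa_dist x z = ray_setdist x" for z
  proof -
    have "z \<in> ray ` {0..}" using that(1) ray_image_def by simp
    then obtain s where s: "0 \<le> s" "z = ray s" by auto
    then have "s = proj_time x" using proj_time_unique[OF x] that(2) by simp
    then show ?thesis using s by simp
  qed
  moreover have "xa_dist x (ray (proj_time x)) = ray_setdist x" using xa_dist_ray_proj_time[OF x] .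
  ultimately have "{z \<in> ray_image. xa_dist x z = ray_setdist x} = {ray (proj_time x)}" by blast
  then show ?thesis unfolding proj_d_def setdist_ray_image[OF x] .
qed

lemma ray_setdist_lipschitz: "x \<in> XA \<Longrightarrow> y \<in> XA \<Longrightarrow> ray_setdist x \<le> xa_dist x y + ray_setdist y"
proof -
  assume x: "x \<in> XA" and y: "y \<in> XA"
  have "ray_setdist x \<le> xa_dist x (ray (proj_time y))" using ray_setdist_le_xa_dist[OF x proj_time_nonneg[OF y]] .
  also have "\<dots> \<le> xa_dist x y + xa_dist y (ray (proj_time y))" using xa_dist_triangle[OF x y ray_in_XA[OF proj_time_nonneg[OF y]]] .
  finally show ?thesis using xa_dist_ray_proj_time[OF y] by simp
qed

lemma ray_setdist_ray: "0 \<le> s \<Longrightarrow> ray_setdist (ray s) = 0"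
  using ray_setdist_le_xa_dist[OF ray_in_XA, of s s] ray_setdist_nonneg[OF ray_in_XA, of s] xa_dist_refl by simp

lemma xa_dist_ray_ray: "0 \<le> u \<Longrightarrow> 0 \<le> s \<Longrightarrow> xa_dist (ray u) (ray s) = \<bar>u - s\<bar>"
  using xa_dist_ray_eq[OF ray_in_XA] ray_dist_ray by simp

lemma diam_ray_pair: "0 \<le> u \<Longrightarrow> 0 \<le> v \<Longrightarrow> diam_d xa_dist {ray u, ray v} = \<bar>u - v\<bar>"
proof -
  assume u: "0 \<le> u" and v: "0 \<le> v"
  have "{xa_dist p q | p q. p \<in> {ray u, ray v} \<and> q \<in> {ray u, ray v}} =
     {xa_dist (ray u) (ray u), xa_dist (ray u) (ray v), xa_dist (ray v) (ray u), xa_dist (ray v) (ray v)}"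
    by blast
  also have "\<dots> = {0, \<bar>u - v\<bar>}"
    using xa_dist_ray_ray[OF u v] xa_dist_ray_ray[OF v u] xa_dist_ray_ray[OF u u] xa_dist_ray_ray[OF v v] by (auto simp: abs_minus_commute)
  finally have "{xa_dist p q | p q. p \<in> {ray u, ray v} \<and> q \<in> {ray u, ray v}} = {0, \<bar>u - v\<bar>}" .
  moreover have "Sup {0, \<bar>u - v\<bar>} = \<bar>u - v\<bar>" by (rule cSup_eq_maximum) auto
  ultimately show ?thesis unfolding diam_d_def by simp
qed

definition in_region :: "nat \<Rightarrow> xa_pt \<Rightarrow> bool" where "in_region k z \<longleftrightarrow> \<not> on_spine_edge z \<and> region z = k"

lemma region_exit:
  assumes "xa_step z z' c" "in_region k z" "\<not> in_region k z'"
  shows "z = ray (entry k) \<or> z = ray (entry k + a k)"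
proof -
  have g1: "ray (entry k) = FP (spine_word k) 0" using ray_in_flat[of k "entry k"] a_ge_1_real[of k] by simp
  have g2: "ray (entry k + a k) = FP (spine_word k) (of_int (a k))" using ray_in_flat[of k "entry k + a k"] a_ge_1_real[of k] by simp
  consider (F) L w w' where "reduced L" "z = FP L w" "z' = FP L w'"
    | (S) j where "z \<in> xa_edge (spine_word j) (a j, 0)" "z' \<in> xa_edge (spine_word j) (a j, 0)"
    | (O) L p where "\<not> (is_spine L \<and> p = (a (length L), 0))" "z \<in> xa_edge L p" "z' \<in> xa_edge L p"
    using xa_step_cases[OF assms(1)] by blast
  then show ?thesis
  proof cases
    case F then show ?thesis using assms(2,3) unfolding in_region_def by simp
  next
    case O then show ?thesis using assms(2,3) off_spine_edge_region[OF O(1,2)] off_spine_edge_region[OF O(1,3)] unfolding in_region_def by simp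
  next
    case S
    then consider "z = FP (spine_word j) (of_int (a j))" | "z = FP (spine_word (Suc j)) 0" | t where "z = EP (spine_word j) (a j, 0) t"
      using spine_edge_cases by blast
    then show ?thesis
    proof cases
      case 1 then have "j = k" using assms(2) unfolding in_region_def by simp
      then show ?thesis using 1 g2 by simp
    next
      case 2 then have "Suc j = k" using assms(2) unfolding in_region_def by simp
      then show ?thesis using 2 g1 by simp
    next
      case 3 then show ?thesis using assms(2) unfolding in_region_def by simp
    qed
  qed
qed

lemma ray_setdist_region_exit:
  assumes "xa_step z z' c" "in_region k z" "\<not> in_region k z'"
  shows "ray_setdist z = 0"
proof -
  have "0 \<le> entry k" "0 \<le> entry k + a k" using entry_nonneg[of k] a_ge_1_real[of k] by linarith+
  then show ?thesis using region_exit[OF assms] ray_setdist_ray by auto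
qed

text \<open>By \<open>region_exit\<close> one leaves a region only through the ray, so the distance to the ray,
  negated outside the region of \<open>x\<close>, is still 1-Lipschitz on every cell.\<close>

lemma ray_setdist_sum_le:
  assumes x: "x \<in> XA" and y: "y \<in> XA" and "\<not> on_spine_edge x" "\<not> in_region (region x) y"
  shows "ray_setdist x + ray_setdist y \<le> xa_dist x y"
proof -
  let ?k = "region x"
  define g where "g z = (if in_region ?k z then ray_setdist z else - ray_setdist z)" for z
  have "g u - g v \<le> c" if st: "xa_step u v c" for u v c
  proof -
    have uv: "u \<in> XA" "v \<in> XA" using xa_step_in_XA[OF st] by auto
    have duv: "xa_dist u v \<le> c" "xa_dist v u \<le> c" using xa_dist_le_step[OF st] xa_dist_le_step[OF xa_step_sym[OF st]] by auto
    have l1: "ray_setdist u \<le> xa_dist u v + ray_setdist v" "ray_setdist v \<le> xa_dist v u + ray_setdist u" using ray_setdist_lipschitz uv by auto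
    have p0: "ray_setdist u \<ge> 0" "ray_setdist v \<ge> 0" using ray_setdist_nonneg uv by auto
    consider "in_region ?k u = in_region ?k v" | "in_region ?k u" "\<not> in_region ?k v"
      | "\<not> in_region ?k u" "in_region ?k v" by blast
    then show ?thesis
    proof cases
      case 1
      then show ?thesis unfolding g_def using l1 duv by auto
    next
      case 2
      then show ?thesis unfolding g_def using ray_setdist_region_exit[OF st 2] l1 duv by auto
    next
      case 3
      then show ?thesis unfolding g_def using ray_setdist_region_exit[OF xa_step_sym[OF st] 3(2,1)]
        p0 xa_step_nonneg[OF st] by auto
    qed
  qed
  then have "g x - g y \<le> xa_dist x y" using step_lipschitz_le_xa_dist x y by blast
  moreover have "in_region ?k x" unfolding in_region_def using assms(3) by simp
  ultimately show ?thesis unfolding g_def using assms(4) by simp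
qed

lemma proj_time_range: "\<not> on_spine_edge x \<Longrightarrow> entry (region x) \<le> proj_time x \<and> proj_time x \<le> entry (region x) + a (region x)"
  unfolding proj_time_def using seg_clamp_range by auto

lemma entry_region_le_norm: "x \<in> XA \<Longrightarrow> \<not> on_spine_edge x \<Longrightarrow> entry (region x) \<le> xa_dist xa_o x"
proof -
  assume x: "x \<in> XA" "\<not> on_spine_edge x"
  have "xa_dist xa_o x = ray_dist 0 x" using xa_dist_ray_eq[OF x(1), of 0] ray_0 xa_dist_sym[of xa_o x] by simp
  moreover have "0 \<le> xa_dist x (anchor_pt x)" using xa_dist_nonneg[OF x(1) anchor_pt_in_XA] .
  moreover have "ray_dist 0 x = xa_dist x (anchor_pt x) + flat_dist (region x) (anchor x) 0" unfolding ray_dist_def using x(2) by simp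
  moreover have "entry (region x) \<le> flat_dist (region x) (anchor x) 0" by (rule entry_le_flat_dist_0)
  ultimately show ?thesis by linarith
qed

lemma proj_time_eq:
  assumes x: "x \<in> XA" and y: "y \<in> XA" and "ray_setdist y = 0" "xa_dist x y \<le> ray_setdist x"
  shows "proj_time y = proj_time x"
proof -
  have "xa_dist x (ray (proj_time y)) \<le> xa_dist x y + xa_dist y (ray (proj_time y))"
    using xa_dist_triangle[OF x y ray_in_XA[OF proj_time_nonneg[OF y]]] .
  then have "xa_dist x (ray (proj_time y)) \<le> ray_setdist x" using xa_dist_ray_proj_time[OF y] assms(3,4) by simp
  then show ?thesis using proj_time_unique[OF x proj_time_nonneg[OF y]] by simp
qed

lemma proj_time_close:
  assumes x: "x \<in> XA" and y: "y \<in> XA" and d: "xa_dist x y \<le> ray_setdist x"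
  shows "(\<not> on_spine_edge x \<and> \<bar>proj_time x - proj_time y\<bar> \<le> a (region x)) \<or> proj_time y = proj_time x"
proof (cases "on_spine_edge x")
  case True
  then have "ray_setdist x = 0" unfolding ray_setdist_def by simp
  then have "ray_setdist y \<le> 0" using ray_setdist_lipschitz[OF y x] d xa_dist_sym by simp
  then have "ray_setdist y = 0" using ray_setdist_nonneg[OF y] by simp
  then show ?thesis using proj_time_eq[OF x y _ d] by simp
next
  case False
  show ?thesis
  proof (cases "in_region (region x) y")
    case True
    then have "\<not> on_spine_edge y" "region y = region x" unfolding in_region_def by auto
    then show ?thesis using proj_time_range[of x] proj_time_range[of y] False by auto
  next
    case F2: False
    have "ray_setdist x + ray_setdist y \<le> xa_dist x y" using ray_setdist_sum_le[OF x y False F2] .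
    then have "ray_setdist y = 0" using d ray_setdist_nonneg[OF y] by simp
    then show ?thesis using proj_time_eq[OF x y _ d] by simp
  qed
qed

text \<open>A function that is 1-Lipschitz on every cell and vanishes exactly on the spine flats and on
  the edges of the ray; it shows that points at distance 0 from the ray lie on it.\<close>

definition depth :: "xa_pt \<Rightarrow> real" where
 "depth x = (case x of FP M z \<Rightarrow> if is_spine M then 0 else 1
   | EP M p t \<Rightarrow> if is_spine M then (if p = (a (length M), 0) then 0 else t)
       else if Suc (spine_prefix 0 M) = length M \<and> snd (last M) = False \<and> p = (0, 0) then 1 - t else 1)"

lemma depth_branch_edge:
  assumes "is_spine L" "p \<noteq> (a (length L), 0)" "u \<in> xa_edge L p"
  shows "depth u = epar L p u"
proof -
  consider "u = FP L (lat p)" | "u = edge_target L p" | t where "u = EP L p t"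
    using xa_edge_cases[OF assms(3)] by blast
  then show ?thesis
  proof cases
    case 1
    then show ?thesis using assms(1) unfolding depth_def by (simp add: epar_source)
  next
    case 2
    then show ?thesis
      using edge_target_spine[OF assms(1)] branch_word_not_spine[OF assms(1,2)] epar_target[of L p]
      unfolding depth_def by simp
  next
    case 3
    then show ?thesis using assms(1,2) unfolding depth_def by (simp add: epar_EP)
  qed
qed

lemma depth_return_edge:
  assumes "L \<noteq> []" "snd (last L) = False" "Suc (spine_prefix 0 L) = length L" "u \<in> xa_edge L (0, 0)"
  shows "depth u = 1 - epar L (0, 0) u"
proof -
  note R = return_word_spine_prefix[OF assms(1,2)]
  consider "u = FP L (lat (0, 0))" | "u = edge_target L (0, 0)" | t where "u = EP L (0, 0) t"
    using xa_edge_cases[OF assms(4)] by blast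
  then show ?thesis
  proof cases
    case 1
    then show ?thesis using R(1) unfolding depth_def by (simp add: epar_source)
  next
    case 2
    have "edge_target L (0, 0) = FP (butlast L) (lat (fst (last L)))"
      using assms(1,2) unfolding edge_target_def by simp
    then show ?thesis using 2 R(3) assms(3) epar_target[of L "(0, 0)"] unfolding depth_def by simp
  next
    case 3
    then show ?thesis using R(1) assms unfolding depth_def by (simp add: epar_EP)
  qed
qed

lemma depth_far_edge:
  assumes "\<not> is_spine L" "\<not> (Suc (spine_prefix 0 L) = length L \<and> snd (last L) = False \<and> p = (0, 0))"
    "u \<in> xa_edge L p"
  shows "depth u = 1"
proof -
  consider "u = FP L (lat p)" | "u = edge_target L p" | t where "u = EP L p t"
    using xa_edge_cases[OF assms(3)] by blast
  then show ?thesis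
  proof cases
    case 2
    show ?thesis
    proof (cases "L \<noteq> [] \<and> snd (last L) = False \<and> p = (0, 0)")
      case True
      then have "u = FP (butlast L) (lat (fst (last L)))" using 2 unfolding edge_target_def by simp
      then show ?thesis using return_word_spine_prefix[of L] True assms(2) unfolding depth_def by simp
    next
      case False
      then have "u = FP (L @ [(p, True)]) 0" using 2 unfolding edge_target_def by auto
      then show ?thesis using not_spine_append[OF assms(1)] unfolding depth_def by simp
    qed
  qed (use assms in \<open>auto simp: depth_def\<close>)
qed

lemma depth_lipschitz: "xa_step x y c \<Longrightarrow> depth x - depth y \<le> c"
proof -
  assume st: "xa_step x y c"
  consider (F) L z w where "reduced L" "x = FP L z" "y = FP L w" "c = cmod (z - w)"
    | (S) k where "x \<in> xa_edge (spine_word k) (a k, 0)" "y \<in> xa_edge (spine_word k) (a k, 0)"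
    | (O) L p where "\<not> (is_spine L \<and> p = (a (length L), 0))" "x \<in> xa_edge L p" "y \<in> xa_edge L p"
         "c = \<bar>epar L p x - epar L p y\<bar>"
    using xa_step_cases[OF st] by blast
  then show ?thesis
  proof cases
    case F
    then show ?thesis unfolding depth_def by simp
  next
    case S
    have "depth u = 0" if u: "u \<in> xa_edge (spine_word k) (a k, 0)" for u
    proof -
      consider "u = FP (spine_word k) (of_int (a k))" | "u = FP (spine_word (Suc k)) 0"
        | t where "u = EP (spine_word k) (a k, 0) t"
        using spine_edge_cases[OF u] by blast
      then show ?thesis unfolding depth_def by cases simp_all
    qed
    then show ?thesis using S xa_step_nonneg[OF st] by simp
  next
    case O
    consider "is_spine L" "p \<noteq> (a (length L), 0)"
      | "L \<noteq> []" "snd (last L) = False" "Suc (spine_prefix 0 L) = length L" "p = (0, 0)"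
      | "\<not> is_spine L" "\<not> (Suc (spine_prefix 0 L) = length L \<and> snd (last L) = False \<and> p = (0, 0))"
      using O(1) by fastforce
    then show ?thesis
    proof cases
      case 1
      then show ?thesis using O depth_branch_edge[OF 1] by simp
    next
      case 2
      then show ?thesis using O depth_return_edge[OF 2(1-3)] by simp
    next
      case 3
      then show ?thesis using O depth_far_edge[OF 3] by simp
    qed
  qed
qed

lemma depth_anchor_pt: "depth (anchor_pt x) = 0" unfolding anchor_pt_def depth_def by simp

lemma depth_zero:
  assumes "x \<in> XA" "\<not> on_spine_edge x" "depth x \<le> 0"
  shows "x = anchor_pt x"
proof (cases x)
  case (FP M z)
  then have sp: "is_spine M" using assms(3) unfolding depth_def by (auto split: if_splits)
  have r: "region x = length M" using FP sp unfolding is_spine_def by simp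
  have an: "anchor x = z" using FP sp by simp
  have LM: "spine_word (length M) = M" using is_spine_eq[OF sp] by (rule sym)
  have "anchor_pt x = FP (spine_word (length M)) z" unfolding anchor_pt_def r an ..
  also have "\<dots> = x" using LM FP by simp
  finally show ?thesis by (rule sym)
next
  case (EP M p t)
  then have t: "0 < t" "t < 1" using assms(1) unfolding XA_def by auto
  then show ?thesis using assms(2,3) EP unfolding depth_def by (auto split: if_splits)
qed

lemma ray_setdist_zero_in_image: "x \<in> XA \<Longrightarrow> ray_setdist x \<le> 0 \<Longrightarrow> x \<in> ray_image"
proof -
  assume x: "x \<in> XA" and p: "ray_setdist x \<le> 0"
  show ?thesis
  proof (cases "on_spine_edge x")
    case True
    have "x = ray (edge_time x)" "edge_time x \<in> {0..}" using on_spine_edge_ray[OF x True] by auto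
    then show ?thesis unfolding ray_image_def by (rule image_eqI)
  next
    case False
    have r: "0 \<le> xa_dist x (anchor_pt x)" using xa_dist_nonneg[OF x anchor_pt_in_XA] .
    have rr: "0 \<le> seg_dist (region x) (anchor x)" unfolding seg_dist_def by simp
    have "xa_dist x (anchor_pt x) = 0" "seg_dist (region x) (anchor x) = 0" using p r rr False unfolding ray_setdist_def by auto
    moreover have "depth x - depth (anchor_pt x) \<le> xa_dist x (anchor_pt x)" using step_lipschitz_le_xa_dist[OF _ x anchor_pt_in_XA] depth_lipschitz by blast
    ultimately have "depth x \<le> 0" using depth_anchor_pt by simp
    then have xA: "x = anchor_pt x" using depth_zero[OF x False] by simp
    define k where "k = region x"
    define c where "c = seg_clamp k (anchor x)"
    have wc: "anchor x = complex_of_real c" using \<open>seg_dist (region x) (anchor x) = 0\<close> unfolding seg_dist_def c_def k_def by simp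
    have x1: "x = FP (spine_word k) (anchor x)" using xA unfolding anchor_pt_def k_def .
    have "FP (spine_word k) (anchor x) = FP (spine_word k) (complex_of_real c)" using wc by simp
    then have x2: "x = FP (spine_word k) (complex_of_real c)" by (rule trans[OF x1])
    have cr: "0 \<le> c" "c \<le> a k" using seg_clamp_range unfolding c_def by auto
    have "ray (entry k + c) = FP (spine_word k) (complex_of_real c)" using ray_in_flat[of k "entry k + c"] cr by simp
    then have "x = ray (entry k + c)" using x2 by simp
    moreover have "entry k + c \<in> {0..}" using entry_nonneg[of k] cr by simp
    ultimately show ?thesis unfolding ray_image_def by (rule image_eqI)
  qed
qed

lemma ray_image_closed: "closed_d XA xa_dist ray_image"
  unfolding closed_d_def
proof (intro conjI ballI impI)
  show "ray_image \<subseteq> XA" unfolding ray_image_def using ray_in_XA by auto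
next
  fix x assume x: "x \<in> XA" and h: "\<forall>e>0. \<exists>z\<in>ray_image. xa_dist x z < e"
  have "ray_setdist x \<le> 0"
  proof (rule ccontr)
    assume "\<not> ray_setdist x \<le> 0"
    then have "ray_setdist x > 0" by simp
    then obtain z where z: "z \<in> ray_image" "xa_dist x z < ray_setdist x" using h by blast
    have "z \<in> ray ` {0..}" using z(1) unfolding ray_image_def by simp
    then obtain s where s: "0 \<le> s" "z = ray s" by auto
    then show False using ray_setdist_le_xa_dist[OF x s(1)] z(2) by simp
  qed
  then show "x \<in> ray_image" using ray_setdist_zero_in_image[OF x] by simp
qed

lemma geo_ray_ray: "geo_ray XA xa_dist xa_o ray"
  unfolding geo_ray_def using ray_0 ray_in_XA xa_dist_ray_ray by simp

lemma ray_image_contracting: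
  fixes lam :: "real \<Rightarrow> real" and C :: real
  assumes C: "0 \<le> C" and hk: "\<And>k. real_of_int (a k) \<le> C * lam (entry k)" and m: "mono_on {0..} lam"
    and l0: "\<And>t. 0 \<le> t \<Longrightarrow> 0 \<le> lam t"
  shows "contracting XA xa_dist xa_o lam ray_image"
  unfolding contracting_def
proof (intro conjI exI[of _ C] ballI impI)
  show "closed_d XA xa_dist ray_image" by (rule ray_image_closed)
next
  fix x y assume x: "x \<in> XA" and y: "y \<in> XA" and d: "xa_dist x y \<le> setdist_d xa_dist x ray_image"
  have d': "xa_dist x y \<le> ray_setdist x" using d setdist_ray_image[OF x] by simp
  have pr: "proj_d xa_dist x ray_image \<union> proj_d xa_dist y ray_image = {ray (proj_time x), ray (proj_time y)}"
    using proj_ray_image[OF x] proj_ray_image[OF y] by auto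
  have diam: "diam_d xa_dist (proj_d xa_dist x ray_image \<union> proj_d xa_dist y ray_image) = \<bar>proj_time x - proj_time y\<bar>"
    unfolding pr using diam_ray_pair proj_time_nonneg x y by simp
  have n0: "0 \<le> xa_dist xa_o x" using xa_dist_nonneg[OF origin_in_XA x] .
  show "diam_d xa_dist (proj_d xa_dist x ray_image \<union> proj_d xa_dist y ray_image) \<le> C * lam (xa_dist xa_o x)"
    unfolding diam
  proof (cases "proj_time y = proj_time x")
    case True then show "\<bar>proj_time x - proj_time y\<bar> \<le> C * lam (xa_dist xa_o x)" using C l0[OF n0] by simp
  next
    case False
    then have ns: "\<not> on_spine_edge x" and b: "\<bar>proj_time x - proj_time y\<bar> \<le> a (region x)" using proj_time_close[OF x y d'] by auto
    have "entry (region x) \<le> xa_dist xa_o x" using entry_region_le_norm[OF x ns] .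
    then have "lam (entry (region x)) \<le> lam (xa_dist xa_o x)" using m entry_nonneg n0 unfolding mono_on_def by simp
    then have "C * lam (entry (region x)) \<le> C * lam (xa_dist xa_o x)" using C by (simp add: mult_left_mono)
    then show "\<bar>proj_time x - proj_time y\<bar> \<le> C * lam (xa_dist xa_o x)" using b hk[of "region x"] by linarith
  qed
qed

lemma ray_image_in_bdry:
  assumes "0 \<le> C" "\<And>k. real_of_int (a k) \<le> C * lam (entry k)" "mono_on {0..} lam"
    "\<And>t. 0 \<le> t \<Longrightarrow> 0 \<le> lam t"
  shows "ray_image \<in> bdry XA xa_dist xa_o lam"
  using ray_image_contracting[OF assms] geo_ray_ray unfolding bdry_def ray_image_def by blast

lemma norm_spine_flat:
  assumes "0 < k"
  shows "xa_dist xa_o (FP (spine_word k) w) = entry k + cmod w"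
proof -
  have "0 < entry k" using entry_strict_mono[OF assms] by simp
  have "xa_dist xa_o (FP (spine_word k) w) = ray_dist 0 (FP (spine_word k) w)"
    using xa_dist_ray_eq[OF spine_flat_in_XA, of 0] ray_0 xa_dist_sym by simp
  also have "\<dots> = entry k + cmod w"
    using ray_dist_spine_flat flat_dist_before[OF \<open>0 < entry k\<close>] by simp
  finally show ?thesis .
qed

lemma ray_setdist_spine_flat: "ray_setdist (FP (spine_word k) w) = seg_dist k w"
  unfolding ray_setdist_def anchor_pt_def by (simp add: xa_dist_refl)

lemma proj_time_spine_flat: "proj_time (FP (spine_word k) w) = entry k + seg_clamp k w"
  unfolding proj_time_def by simp

lemma ray_image_in_bdry_imp:
  assumes "ray_image \<in> bdry XA xa_dist xa_o lam"
  shows "\<exists>c. \<forall>k>0. real_of_int (a k) \<le> c * lam (entry k + a k)"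
proof -
  have "contracting XA xa_dist xa_o lam ray_image"
    using assms unfolding bdry_def by auto
  then obtain c where c: "\<forall>x\<in>XA. \<forall>y\<in>XA. xa_dist x y \<le> setdist_d xa_dist x ray_image \<longrightarrow>
      diam_d xa_dist (proj_d xa_dist x ray_image \<union> proj_d xa_dist y ray_image) \<le> c * lam (xa_dist xa_o x)"
    unfolding contracting_def by blast
  have "real_of_int (a k) \<le> c * lam (entry k + a k)" if "0 < k" for k
  proof -
    define x where "x = FP (spine_word k) (Complex 0 (a k))"
    define y where "y = FP (spine_word k) (Complex (a k) (a k))"
    have xy: "x \<in> XA" "y \<in> XA" unfolding x_def y_def using spine_flat_in_XA by auto
    have a: "1 \<le> real_of_int (a k)" by (rule a_ge_1_real)
    have "xa_dist x y \<le> cmod (Complex 0 (a k) - Complex (a k) (a k))"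
      unfolding x_def y_def by (rule xa_dist_le_step[OF xa_step_flat[OF reduced_spine_word_from]])
    also have "\<dots> = ray_setdist x"
      unfolding x_def ray_setdist_spine_flat seg_dist_def seg_clamp_def using a by (simp add: cmod_def)
    finally have "xa_dist x y \<le> setdist_d xa_dist x ray_image" using setdist_ray_image[OF xy(1)] by simp
    then have "diam_d xa_dist (proj_d xa_dist x ray_image \<union> proj_d xa_dist y ray_image)
        \<le> c * lam (xa_dist xa_o x)" using c xy by blast
    moreover have "proj_time x = entry k" "proj_time y = entry k + a k"
      unfolding x_def y_def proj_time_spine_flat seg_clamp_def using a by simp_all
    then have "diam_d xa_dist (proj_d xa_dist x ray_image \<union> proj_d xa_dist y ray_image) = a k"
      using proj_ray_image[OF xy(1)] proj_ray_image[OF xy(2)] diam_ray_pair[of "entry k" "entry k + a k"]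
        entry_nonneg[of k] a by (simp add: insert_commute)
    moreover have "xa_dist xa_o x = entry k + a k"
      unfolding x_def norm_spine_flat[OF \<open>0 < k\<close>] using a by (simp add: cmod_def)
    ultimately show ?thesis by simp
  qed
  then show ?thesis by blast
qed

end

section \<open>Admissible functions and the main theorem\<close>

primrec entry_times :: "(real \<Rightarrow> real) \<Rightarrow> nat \<Rightarrow> real" where
  "entry_times f 0 = 0"
| "entry_times f (Suc k) = entry_times f k + real_of_int \<lfloor>f (entry_times f k)\<rfloor> + 1"

lemma admissible_ge_1: "admissible f \<Longrightarrow> 0 \<le> t \<Longrightarrow> 1 \<le> f t"
  unfolding admissible_def by auto

lemma admissible_mono: "admissible f \<Longrightarrow> 0 \<le> s \<Longrightarrow> s \<le> t \<Longrightarrow> f s \<le> f t"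
  unfolding admissible_def by (auto intro: mono_onD)

lemma entry_times_nonneg: "admissible f \<Longrightarrow> 0 \<le> entry_times f k"
proof (induction k)
  case (Suc k)
  then have "1 \<le> f (entry_times f k)" using admissible_ge_1 by blast
  then have "1 \<le> real_of_int \<lfloor>f (entry_times f k)\<rfloor>" by simp
  then show ?case using Suc by simp
qed simp

lemma spine_ray_entry_times: "admissible f \<Longrightarrow> spine_ray (\<lambda>k. \<lfloor>f (entry_times f k)\<rfloor>)"
  by unfold_locales (simp add: admissible_ge_1 entry_times_nonneg)

lemma contracting_mono:
  assumes "contracting X d b lam' Z" "\<And>x. x \<in> X \<Longrightarrow> 0 \<le> d b x"
    and "\<And>t. 0 \<le> t \<Longrightarrow> 0 \<le> lam' t" "\<And>t. 0 \<le> t \<Longrightarrow> lam' t \<le> C * lam t"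
  shows "contracting X d b lam Z"
proof -
  obtain c where closed: "closed_d X d Z" and c: "\<forall>x\<in>X. \<forall>y\<in>X. d x y \<le> setdist_d d x Z \<longrightarrow>
      diam_d d (proj_d d x Z \<union> proj_d d y Z) \<le> c * lam' (d b x)"
    using assms(1) unfolding contracting_def by blast
  have "diam_d d (proj_d d x Z \<union> proj_d d y Z) \<le> max c 0 * C * lam (d b x)"
    if "x \<in> X" "y \<in> X" "d x y \<le> setdist_d d x Z" for x y
  proof -
    have "diam_d d (proj_d d x Z \<union> proj_d d y Z) \<le> c * lam' (d b x)" using c that by blast
    also have "\<dots> \<le> max c 0 * lam' (d b x)" using assms(2,3) that(1) by (simp add: mult_right_mono)
    also have "\<dots> \<le> max c 0 * (C * lam (d b x))" using assms(2,4) that(1) by (simp add: mult_left_mono)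
    finally show ?thesis by (simp add: mult.assoc)
  qed
  then show ?thesis using closed unfolding contracting_def by blast
qed

lemma bdry_mono:
  assumes "\<And>x. x \<in> X \<Longrightarrow> 0 \<le> d b x"
    and "\<And>t. 0 \<le> t \<Longrightarrow> 0 \<le> lam' t" "\<And>t. 0 \<le> t \<Longrightarrow> lam' t \<le> C * lam t"
  shows "bdry X d b lam' \<subseteq> bdry X d b lam"
proof -
  have "contracting X d b lam Z" if "contracting X d b lam' Z" for Z
    using contracting_mono[OF that assms] .
  then show ?thesis unfolding bdry_def by blast
qed

lemma admissible_dominated:
  assumes k: "admissible \<kappa>" and k': "admissible \<kappa>'" and r: "((\<lambda>t. \<kappa>' t / \<kappa> t) \<longlongrightarrow> 0) at_top"
  shows "\<exists>C. \<forall>t\<ge>0. \<kappa>' t \<le> C * \<kappa> t"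
proof -
  obtain N where N: "\<And>t. N \<le> t \<Longrightarrow> \<kappa>' t / \<kappa> t < 1"
    using order_tendstoD(2)[OF r, of 1] unfolding eventually_at_top_linorder by auto
  define C where "C = max 1 (\<kappa>' (max N 0))"
  have "\<kappa>' t \<le> C * \<kappa> t" if t: "0 \<le> t" for t
  proof -
    have k1: "1 \<le> \<kappa> t" using admissible_ge_1[OF k t] .
    have C1: "1 \<le> C" unfolding C_def by simp
    show ?thesis
    proof (cases "t \<le> max N 0")
      case True
      have "\<kappa>' t \<le> C" using admissible_mono[OF k' t True] unfolding C_def by linarith
      also have "\<dots> \<le> C * \<kappa> t" using k1 C1 by (simp add: mult_le_cancel_left1)
      finally show ?thesis .
    next
      case False
      then have "\<kappa>' t < \<kappa> t" using N[of t] k1 by (simp add: divide_less_eq)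
      also have "\<dots> \<le> C * \<kappa> t" using k1 C1 by (simp add: mult_le_cancel_right1)
      finally show ?thesis by simp
    qed
  qed
  then show ?thesis by blast
qed

lemma concave_on_double_le:
  fixes f :: "real \<Rightarrow> real"
  assumes "concave_on {0..} f" "0 \<le> f 0" "0 \<le> t"
  shows "f (2 * t) \<le> 2 * f t"
proof -
  have "(1 - 1/2) * f 0 + 1/2 * f (2 * t) \<le> f ((1 - 1/2) *\<^sub>R 0 + (1/2) *\<^sub>R (2 * t))"
    using concave_onD[OF assms(1), of "1/2" 0 "2 * t"] assms(3) by simp
  then show ?thesis using assms(2) by simp
qed

text \<open>If \<open>\<kappa>'\<close> is negligible against \<open>\<kappa>\<close>, no constant makes \<open>\<lfloor>\<kappa> t\<rfloor> \<le> c \<kappa>' (t + \<lfloor>\<kappa> t\<rfloor>)\<close> along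
  an unbounded sequence: sublinearity of \<open>\<kappa>\<close> gives \<open>t + \<lfloor>\<kappa> t\<rfloor> \<le> 2 t\<close>, and concavity of \<open>\<kappa>'\<close>
  gives \<open>\<kappa>' (2 t) \<le> 2 \<kappa>' t\<close>.\<close>

lemma admissible_floor_not_dominated:
  fixes T :: "nat \<Rightarrow> real"
  assumes k: "admissible \<kappa>" and k': "admissible \<kappa>'" and r: "((\<lambda>t. \<kappa>' t / \<kappa> t) \<longlongrightarrow> 0) at_top"
    and T: "\<And>k. real k \<le> T k"
  shows "\<exists>k>0. c * \<kappa>' (T k + \<lfloor>\<kappa> (T k)\<rfloor>) < \<lfloor>\<kappa> (T k)\<rfloor>"
proof -
  define c' where "c' = max c 1"
  have c': "0 < c'" "c \<le> c'" unfolding c'_def by auto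
  have sublin: "((\<lambda>t. \<kappa> t / t) \<longlongrightarrow> 0) at_top" using k unfolding admissible_def by blast
  have "\<forall>\<^sub>F t in at_top. \<kappa>' t / \<kappa> t < 1 / (4 * c') \<and> \<kappa> t / t < 1 \<and> 1 \<le> t"
    using order_tendstoD(2)[OF r, of "1 / (4 * c')"] order_tendstoD(2)[OF sublin, of 1]
      eventually_ge_at_top[of 1] c' by (simp add: eventually_conj_iff)
  then obtain N where N: "\<And>t. N \<le> t \<Longrightarrow> \<kappa>' t / \<kappa> t < 1 / (4 * c') \<and> \<kappa> t / t < 1 \<and> 1 \<le> t"
    unfolding eventually_at_top_linorder by blast
  define k where "k = Suc (nat \<lceil>N\<rceil>)"
  define t where "t = T k"
  have "N \<le> t" using T[of k] real_nat_ceiling_ge[of N] unfolding t_def k_def by linarith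
  then have t: "\<kappa>' t / \<kappa> t < 1 / (4 * c')" "\<kappa> t / t < 1" "1 \<le> t" using N by auto
  define A where "A = real_of_int \<lfloor>\<kappa> t\<rfloor>"
  have k1: "1 \<le> \<kappa> t" using admissible_ge_1[OF k] t(3) by simp
  have "A \<le> \<kappa> t" "\<kappa> t - 1 < A" "1 \<le> A" unfolding A_def using k1 by simp_all
  then have A: "A \<le> \<kappa> t" "\<kappa> t < 2 * A" by linarith+
  have "\<kappa> t < t" using t(2,3) by (simp add: divide_less_eq)
  have "4 * c' * \<kappa>' t < \<kappa> t" using t(1) k1 c' by (simp add: divide_less_eq field_simps)
  have "\<kappa>' (t + A) \<le> \<kappa>' (2 * t)"
    using admissible_mono[OF k', of "t + A" "2 * t"] A \<open>\<kappa> t < t\<close> t(3) k1 by simp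
  also have "\<dots> \<le> 2 * \<kappa>' t"
  proof (rule concave_on_double_le)
    show "concave_on {0..} \<kappa>'" using k' unfolding admissible_def by blast
    show "0 \<le> \<kappa>' 0" using admissible_ge_1[OF k', of 0] by simp
  qed (use t(3) in simp)
  finally have double: "\<kappa>' (t + A) \<le> 2 * \<kappa>' t" .
  have "0 \<le> \<kappa>' (t + A)" using admissible_ge_1[OF k', of "t + A"] A t(3) k1 by simp
  then have "c * \<kappa>' (t + A) \<le> c' * \<kappa>' (t + A)" by (rule mult_right_mono[OF c'(2)])
  also have "\<dots> \<le> c' * (2 * \<kappa>' t)" using double c'(1) by simp
  also have "\<dots> < A" using \<open>4 * c' * \<kappa>' t < \<kappa> t\<close> A by linarith
  finally have "c * \<kappa>' (T k + \<lfloor>\<kappa> (T k)\<rfloor>) < \<lfloor>\<kappa> (T k)\<rfloor>" unfolding A_def t_def .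
  then show ?thesis by (intro exI[of _ k]) (simp add: k_def)
qed

lemma bdry_strictly_larger:
  assumes k: "admissible \<kappa>" and k': "admissible \<kappa>'" and r: "((\<lambda>t. \<kappa>' t / \<kappa> t) \<longlongrightarrow> 0) at_top"
  shows "\<exists>Z. Z \<in> bdry XA xa_dist xa_o \<kappa> \<and> Z \<notin> bdry XA xa_dist xa_o \<kappa>'"
proof -
  interpret spine_ray "\<lambda>k. \<lfloor>\<kappa> (entry_times \<kappa> k)\<rfloor>" by (rule spine_ray_entry_times[OF k])
  have E: "entry k = entry_times \<kappa> k" for k by (induction k) simp_all
  have "ray_image \<in> bdry XA xa_dist xa_o \<kappa>"
  proof (rule ray_image_in_bdry[of 1])
    show "mono_on {0..} \<kappa>" using k unfolding admissible_def by blast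
    show "0 \<le> \<kappa> t" if "0 \<le> t" for t using admissible_ge_1[OF k that] by simp
  qed (simp_all add: E)
  moreover have "ray_image \<notin> bdry XA xa_dist xa_o \<kappa>'"
  proof
    assume "ray_image \<in> bdry XA xa_dist xa_o \<kappa>'"
    then obtain c where c: "\<forall>k>0. real_of_int \<lfloor>\<kappa> (entry_times \<kappa> k)\<rfloor>
        \<le> c * \<kappa>' (entry k + real_of_int \<lfloor>\<kappa> (entry_times \<kappa> k)\<rfloor>)"
      by (rule exE[OF ray_image_in_bdry_imp])
    have "real k \<le> entry_times \<kappa> k" for k using entry_ge[of k] unfolding E .
    then obtain k where "0 < k" and "c * \<kappa>' (entry_times \<kappa> k + \<lfloor>\<kappa> (entry_times \<kappa> k)\<rfloor>)
        < \<lfloor>\<kappa> (entry_times \<kappa> k)\<rfloor>"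
      using admissible_floor_not_dominated[OF k k' r] by blast
    moreover have "real_of_int \<lfloor>\<kappa> (entry_times \<kappa> k)\<rfloor>
        \<le> c * \<kappa>' (entry_times \<kappa> k + \<lfloor>\<kappa> (entry_times \<kappa> k)\<rfloor>)"
      using c \<open>0 < k\<close> unfolding E by blast
    ultimately show False by linarith
  qed
  ultimately show ?thesis by blast
qed

theorem proposition6p3:
  fixes \<kappa> \<kappa>' :: "real \<Rightarrow> real"
  assumes "admissible \<kappa>" and "admissible \<kappa>'"
    and "((\<lambda>t. \<kappa>' t / \<kappa> t) \<longlongrightarrow> 0) at_top"
  shows "bdry XA xa_dist xa_o \<kappa>' \<subset> bdry XA xa_dist xa_o \<kappa>"
proof -
  obtain C where C: "\<forall>t\<ge>0. \<kappa>' t \<le> C * \<kappa> t" using admissible_dominated[OF assms] by blast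
  have "bdry XA xa_dist xa_o \<kappa>' \<subseteq> bdry XA xa_dist xa_o \<kappa>"
  proof (rule bdry_mono)
    show "0 \<le> xa_dist xa_o x" if "x \<in> XA" for x by (rule xa_dist_nonneg[OF origin_in_XA that])
    show "0 \<le> \<kappa>' t" if "0 \<le> t" for t using admissible_ge_1[OF assms(2) that] by simp
    show "\<kappa>' t \<le> C * \<kappa> t" if "0 \<le> t" for t using C that by blast
  qed
  moreover have "bdry XA xa_dist xa_o \<kappa>' \<noteq> bdry XA xa_dist xa_o \<kappa>"
    using bdry_strictly_larger[OF assms] by blast
  ultimately show ?thesis by (rule psubsetI)
qed

end
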